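(* Let $\omega$ be a weight satisfying the standing assumptions below, with monic planar orthogonal polynomials $(p_k)$ satisfying the three-term recurrence $z\,p_k(z)=p_{k+1}(z)+b_kp_k(z)+c_kp_{k-1}(z)$. Then for all integers $p_1,p_2\ge0$ and $N\ge1$: (1) $$M^{\mathbb C}_{p_1,p_2,N}=\sum_{k=0}^{N-1}\sum_{j=k-p_1\wedge p_2}^{k+p_1\wedge p_2}\frac{h_j}{h_k}(A^{p_1})^j_k(A^{p_2})^j_k,$$ and in particular $M^{\mathbb C}_{p,0,N}=\sum_{k=0}^{N-1}(A^p)^k_k$. (2) $$M^{\mathbb H}_{p_1,p_2,N}=\frac12\sum_{k=0}^{N-1}\mathfrak m_{p_1,p_2,k},$$ and in particular, for the holomorphic moments, $$M^{\mathbb H}_{p,0,N}=\frac12M^{\mathbb C}_{p,0,2N}-\frac12\sum_{j=0}^{N-1}\mu_{N,j}(A^p)^{2N}_{2j},$$ where $M^{\mathbb C}_{p,0,2N}$ is the moment of the complex ensemble with the same weight and $2N$ points.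
   Context: Let $dA(z)=d^2z/\pi$. For a weight $\omega:\mathbb C\to[0,\infty)$ and $N\ge1$, the complex ensemble is the probability density on $\mathbb C^N$ proportional to $\prod_{j<k}|z_j-z_k|^2\prod_{j=1}^N\omega(z_j)\,dA(z_j)$, and the symplectic ensemble is the probability density proportional to $\prod_{j<k}|z_j-z_k|^2|z_j-\bar z_k|^2\prod_{j=1}^N|z_j-\bar z_j|^2\omega(z_j)\,dA(z_j)$. Spectral moments: $M^{\mathbb C}_{p_1,p_2,N}=\mathbb E^{\mathbb C}_N[\sum_{j=1}^Nz_j^{p_1}\bar z_j^{p_2}]$ and $M^{\mathbb H}_{p_1,p_2,N}=\mathbb E^{\mathbb H}_N[\sum_{j=1}^Nz_j^{p_1}\bar z_j^{p_2}]$, expectations w.r.t. the complex and symplectic ensemble respectively. Standing assumptions: $\omega\,dA$ has finite and real moments $\int z^j\bar z^k\omega\,dA\in\mathbb R$, and the inner product $\langle f,g\rangle=\int_{\mathbb C}f(z)\overline{g(z)}\omega(z)\,dA(z)$ on real polynomials is positive definite, with monic orthogonal polynomials $(p_k)_{k\ge0}$, $\langle p_j,p_k\rangle=h_k\delta_{jk}$; $p_{-1}\equiv0$; moreover $h_{2l+1}-c_{2l+1}h_{2l}\neq0$ for all $l$. Coefficients $(A^p)^j_k$: defined by $z^pp_k(z)=\sum_{j=k-p}^{k+p}(A^p)^j_kp_j(z)$, with $(A^p)^j_k=0$ if $j<0$ or $|j-k|>p$ (so $(A^0)^j_k=\delta_{jk}$). Symplectic quantities: $r_k=2(h_{2k+1}-c_{2k+1}h_{2k})$;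 $\lambda_l=\frac{h_{2l+2}-c_{2l+2}h_{2l+1}}{h_{2l+1}-c_{2l+1}h_{2l}}$; $\mu_{k,j}=\prod_{l=j}^{k-1}\lambda_l$ (empty product $=1$). Define $(B^p)^{2n+1}_{2k+1}=(A^p)^{2n+1}_{2k+1}$, $(B^p)^{2n}_{2k+1}=(A^p)^{2n}_{2k+1}-\lambda_n(A^p)^{2n+2}_{2k+1}$, $(B^p)^{2n+1}_{2k}=\sum_{j=0}^k\mu_{k,j}(A^p)^{2n+1}_{2j}$, $(B^p)^{2n}_{2k}=\sum_{j=0}^k\mu_{k,j}(A^p)^{2n}_{2j}-\lambda_n\sum_{j=0}^k\mu_{k,j}(A^p)^{2n+2}_{2j}$, and $$\mathfrak m_{p_1,p_2,k}=\sum_{n=k-\lfloor p_1/2\rfloor}^{k+\lfloor p_1/2\rfloor}\tfrac{r_n}{r_k}(B^{p_1})^{2n+1}_{2k+1}(B^{p_2})^{2n}_{2k}+\sum_{n=k-\lfloor p_2/2\rfloor}^{k+\lfloor p_2/2\rfloor}\tfrac{r_n}{r_k}(B^{p_1})^{2n}_{2k}(B^{p_2})^{2n+1}_{2k+1}-\sum_{n=k-\lfloor (p_1+1)/2\rfloor}^{k+\lfloor (p_1+1)/2\rfloor}\tfrac{r_n}{r_k}(B^{p_1})^{2n}_{2k+1}(B^{p_2})^{2n+1}_{2k}-\sum_{n=k-\lfloor (p_2+1)/2\rfloor}^{k+\lfloor (p_2+1)/2\rfloor}\tfrac{r_n}{r_k}(B^{p_1})^{2n+1}_{2k}(B^{p_2})^{2n}_{2k+1},$$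 where terms with $n<0$ are omitted. Notation $a\wedge b=\min\{a,b\}$. *)

theory Defs
  imports "HOL-Analysis.Analysis" "HOL-Computational_Algebra.Polynomial"
begin

definition dA :: "complex measure" where
  "dA = density lborel (\<lambda>_. ennreal (1 / pi))"

text \<open>N-point configurations are functions nat => complex, restricted to {..<N}
  (product measure of dA).\<close>

definition confM :: "nat \<Rightarrow> (nat \<Rightarrow> complex) measure" where
  "confM N = PiM {..<N} (\<lambda>_. dA)"

definition weightC :: "(complex \<Rightarrow> real) \<Rightarrow> nat \<Rightarrow> (nat \<Rightarrow> complex) \<Rightarrow> real" where
  "weightC \<omega> N z = (\<Prod>j<N. \<Prod>k\<in>{j<..<N}. (cmod (z j - z k))\<^sup>2) * (\<Prod>j<N. \<omega> (z j))"

definition weightH :: "(complex \<Rightarrow> real) \<Rightarrow> nat \<Rightarrow> (nat \<Rightarrow> complex) \<Rightarrow> real" where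
  "weightH \<omega> N z = (\<Prod>j<N. \<Prod>k\<in>{j<..<N}. (cmod (z j - z k))\<^sup>2 * (cmod (z j - cnj (z k)))\<^sup>2)
     * (\<Prod>j<N. (cmod (z j - cnj (z j)))\<^sup>2 * \<omega> (z j))"

definition ens_expect :: "nat \<Rightarrow> ((nat \<Rightarrow> complex) \<Rightarrow> real) \<Rightarrow> ((nat \<Rightarrow> complex) \<Rightarrow> complex) \<Rightarrow> complex" where
  "ens_expect N W F =
     (\<integral>z. F z * complex_of_real (W z) \<partial>confM N) / complex_of_real (\<integral>z. W z \<partial>confM N)"

definition power_sum :: "nat \<Rightarrow> nat \<Rightarrow> nat \<Rightarrow> (nat \<Rightarrow> complex) \<Rightarrow> complex" where
  "power_sum p1 p2 N z = (\<Sum>j<N. z j ^ p1 * cnj (z j) ^ p2)"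

definition momC :: "(complex \<Rightarrow> real) \<Rightarrow> nat \<Rightarrow> nat \<Rightarrow> nat \<Rightarrow> complex" where
  "momC \<omega> p1 p2 N = ens_expect N (weightC \<omega> N) (power_sum p1 p2 N)"

definition momH :: "(complex \<Rightarrow> real) \<Rightarrow> nat \<Rightarrow> nat \<Rightarrow> nat \<Rightarrow> complex" where
  "momH \<omega> p1 p2 N = ens_expect N (weightH \<omega> N) (power_sum p1 p2 N)"

definition ip :: "(complex \<Rightarrow> real) \<Rightarrow> real poly \<Rightarrow> real poly \<Rightarrow> complex" where
  "ip \<omega> f g = (\<integral>z. poly (map_poly complex_of_real f) z * cnj (poly (map_poly complex_of_real g) z)
                    * complex_of_real (\<omega> z) \<partial>dA)"

definition hnorm :: "(complex \<Rightarrow> real) \<Rightarrow> (nat \<Rightarrow> real poly) \<Rightarrow> nat \<Rightarrow> real" where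
  "hnorm \<omega> P k = Re (ip \<omega> (P k) (P k))"

definition expand_coeff :: "(nat \<Rightarrow> real poly) \<Rightarrow> real poly \<Rightarrow> nat \<Rightarrow> real" where
  "expand_coeff P q = (THE a. (\<forall>j. degree q < j \<longrightarrow> a j = 0) \<and>
                               q = (\<Sum>j\<le>degree q. smult (a j) (P j)))"

text \<open>(A^p)^j_k : z^p P_k(z) = sum_j (A^p)^j_k P_j(z).\<close>
definition Acoef :: "(nat \<Rightarrow> real poly) \<Rightarrow> nat \<Rightarrow> nat \<Rightarrow> nat \<Rightarrow> real" where
  "Acoef P p j k = expand_coeff P (monom 1 p * P k) j"

definition rr :: "(nat \<Rightarrow> real) \<Rightarrow> (nat \<Rightarrow> real) \<Rightarrow> nat \<Rightarrow> real" where
  "rr h c k = 2 * (h (2*k+1) - c (2*k+1) * h (2*k))"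

definition lam :: "(nat \<Rightarrow> real) \<Rightarrow> (nat \<Rightarrow> real) \<Rightarrow> nat \<Rightarrow> real" where
  "lam h c l = (h (2*l+2) - c (2*l+2) * h (2*l+1)) / (h (2*l+1) - c (2*l+1) * h (2*l))"

definition mu :: "(nat \<Rightarrow> real) \<Rightarrow> (nat \<Rightarrow> real) \<Rightarrow> nat \<Rightarrow> nat \<Rightarrow> real" where
  "mu h c k j = (\<Prod>l\<in>{j..<k}. lam h c l)"

text \<open>B_odd_odd A p n k = (B^p)^{2n+1}_{2k+1}, B_even_odd = (B^p)^{2n}_{2k+1},
  B_odd_even = (B^p)^{2n+1}_{2k}, B_even_even = (B^p)^{2n}_{2k}.\<close>
definition B_oo :: "(nat \<Rightarrow> nat \<Rightarrow> nat \<Rightarrow> real) \<Rightarrow> nat \<Rightarrow> nat \<Rightarrow> nat \<Rightarrow> real" where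
  "B_oo A p n k = A p (2*n+1) (2*k+1)"

definition B_eo :: "(nat \<Rightarrow> real) \<Rightarrow> (nat \<Rightarrow> real) \<Rightarrow> (nat \<Rightarrow> nat \<Rightarrow> nat \<Rightarrow> real) \<Rightarrow> nat \<Rightarrow> nat \<Rightarrow> nat \<Rightarrow> real" where
  "B_eo h c A p n k = A p (2*n) (2*k+1) - lam h c n * A p (2*n+2) (2*k+1)"

definition B_oe :: "(nat \<Rightarrow> real) \<Rightarrow> (nat \<Rightarrow> real) \<Rightarrow> (nat \<Rightarrow> nat \<Rightarrow> nat \<Rightarrow> real) \<Rightarrow> nat \<Rightarrow> nat \<Rightarrow> nat \<Rightarrow> real" where
  "B_oe h c A p n k = (\<Sum>j\<le>k. mu h c k j * A p (2*n+1) (2*j))"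

definition B_ee :: "(nat \<Rightarrow> real) \<Rightarrow> (nat \<Rightarrow> real) \<Rightarrow> (nat \<Rightarrow> nat \<Rightarrow> nat \<Rightarrow> real) \<Rightarrow> nat \<Rightarrow> nat \<Rightarrow> nat \<Rightarrow> real" where
  "B_ee h c A p n k = (\<Sum>j\<le>k. mu h c k j * A p (2*n) (2*j))
                      - lam h c n * (\<Sum>j\<le>k. mu h c k j * A p (2*n+2) (2*j))"

text \<open>Natural-number subtraction k - m truncates at 0, which realises
  "terms with n < 0 are omitted".\<close>
definition frak_m :: "(nat \<Rightarrow> real) \<Rightarrow> (nat \<Rightarrow> real) \<Rightarrow> (nat \<Rightarrow> nat \<Rightarrow> nat \<Rightarrow> real) \<Rightarrow> nat \<Rightarrow> nat \<Rightarrow> nat \<Rightarrow> real" where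
  "frak_m h c A p1 p2 k =
     (\<Sum>n\<in>{k - p1 div 2 .. k + p1 div 2}. rr h c n / rr h c k * B_oo A p1 n k * B_ee h c A p2 n k)
   + (\<Sum>n\<in>{k - p2 div 2 .. k + p2 div 2}. rr h c n / rr h c k * B_ee h c A p1 n k * B_oo A p2 n k)
   - (\<Sum>n\<in>{k - (p1+1) div 2 .. k + (p1+1) div 2}. rr h c n / rr h c k * B_eo h c A p1 n k * B_oe h c A p2 n k)
   - (\<Sum>n\<in>{k - (p2+1) div 2 .. k + (p2+1) div 2}. rr h c n / rr h c k * B_oe h c A p1 n k * B_eo h c A p2 n k)"

end

(*
  Both densities are squared Vandermonde products, and a Vandermonde determinant may be written
  in any monic polynomial basis.  For the complex ensemble we use the orthogonal polynomials p_k: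
  expanding |Delta(z)|^2 and integrating point by point (Andreief), only diagonal terms survive and
  the moment becomes sum_k <z^p1 p_k, z^p2 p_k> / h_k.  Parseval's identity in the basis p_k turns
  this into the stated sum; it is banded because the three-term recurrence makes multiplication by
  z^p a band operator of width p.

  The symplectic weight is the Vandermonde product of the 2N points z_j, conj z_j times the factors
  z_j - conj z_j, which turn the inner product into the skew form s(f, g) = <z f, g> - <f, z g>.
  In the skew-orthogonal basis q_(2k+1) = p_(2k+1), q_(2k) = sum_j mu_(k,j) p_(2j) the only
  non-zero pairings are s(q_(2k), q_(2k+1)) = r_k / 2, so de Bruijn's formula reduces the moment to
  sum_k of the pairings of z^p1 q_(2k), z^p2 q_(2k+1) divided by r_k, and the skew Parseval
  identity expresses these through the coefficients B.  For holomorphic moments the resulting sum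
  telescopes.
*)

theory Submission
  imports Defs
begin

definition moment_form :: "(nat \<Rightarrow> nat \<Rightarrow> 'a::comm_ring_1) \<Rightarrow> 'a poly \<Rightarrow> 'a poly \<Rightarrow> 'a" where
  "moment_form m f g = (\<Sum>a\<le>degree f. \<Sum>b\<le>degree g. coeff f a * coeff g b * m a b)"

lemma sum_atMost_extend:
  fixes d n :: nat
  assumes "\<And>a. d < a \<Longrightarrow> F a = 0" "d < n"
  shows "sum F {..d} = sum F {..<n}"
  by (rule sum.mono_neutral_left) (use assms in \<open>auto simp: not_le[symmetric]\<close>)

lemma moment_form_lessThan:
  assumes "degree f < n" "degree g < k"
  shows "moment_form m f g = (\<Sum>a<n. \<Sum>b<k. coeff f a * coeff g b * m a b)"
proof -
  have "moment_form m f g = (\<Sum>a<n. \<Sum>b\<le>degree g. coeff f a * coeff g b * m a b)"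
    unfolding moment_form_def by (rule sum_atMost_extend) (use assms in \<open>auto simp: coeff_eq_0\<close>)
  also have "\<dots> = (\<Sum>a<n. \<Sum>b<k. coeff f a * coeff g b * m a b)"
    by (intro sum.cong refl sum_atMost_extend) (use assms in \<open>auto simp: coeff_eq_0\<close>)
  finally show ?thesis .
qed

lemma moment_form_add_left: "moment_form m (f + g) h = moment_form m f h + moment_form m g h"
proof -
  define n where "n = Suc (max (degree f) (degree g))"
  have d: "degree (f + g) < n" "degree f < n" "degree g < n"
    using degree_add_le_max[of f g] by (auto simp: n_def)
  show ?thesis
    unfolding moment_form_lessThan[OF d(1) lessI] moment_form_lessThan[OF d(2) lessI]
      moment_form_lessThan[OF d(3) lessI]
    by (simp add: sum.distrib[symmetric] algebra_simps)
qed

lemma moment_form_add_right: "moment_form m h (f + g) = moment_form m h f + moment_form m h g"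
proof -
  define n where "n = Suc (max (degree f) (degree g))"
  have d: "degree (f + g) < n" "degree f < n" "degree g < n"
    using degree_add_le_max[of f g] by (auto simp: n_def)
  show ?thesis
    unfolding moment_form_lessThan[OF lessI d(1)] moment_form_lessThan[OF lessI d(2)]
      moment_form_lessThan[OF lessI d(3)]
    by (simp add: sum.distrib[symmetric] algebra_simps)
qed

lemma moment_form_smult_left: "moment_form m (smult a f) h = a * moment_form m f h"
proof -
  let ?n = "Suc (degree f)" and ?k = "Suc (degree h)"
  have "moment_form m (smult a f) h = (\<Sum>i<?n. \<Sum>j<?k. coeff (smult a f) i * coeff h j * m i j)"
    by (rule moment_form_lessThan) (simp_all add: le_imp_less_Suc degree_smult_le)
  moreover have "moment_form m f h = (\<Sum>i<?n. \<Sum>j<?k. coeff f i * coeff h j * m i j)"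
    by (rule moment_form_lessThan) simp_all
  ultimately show ?thesis by (simp add: sum_distrib_left algebra_simps del: sum.lessThan_Suc)
qed

lemma moment_form_smult_right: "moment_form m h (smult a f) = a * moment_form m h f"
proof -
  let ?n = "Suc (degree h)" and ?k = "Suc (degree f)"
  have "moment_form m h (smult a f) = (\<Sum>i<?n. \<Sum>j<?k. coeff h i * coeff (smult a f) j * m i j)"
    by (rule moment_form_lessThan) (simp_all add: le_imp_less_Suc degree_smult_le)
  moreover have "moment_form m h f = (\<Sum>i<?n. \<Sum>j<?k. coeff h i * coeff f j * m i j)"
    by (rule moment_form_lessThan) simp_all
  ultimately show ?thesis by (simp add: sum_distrib_left algebra_simps del: sum.lessThan_Suc)
qed

lemma moment_form_0_left [simp]: "moment_form m 0 h = 0"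
  and moment_form_0_right [simp]: "moment_form m h 0 = 0"
  by (simp_all add: moment_form_def)

lemma moment_form_sum_left: "moment_form m (\<Sum>i\<in>I. F i) h = (\<Sum>i\<in>I. moment_form m (F i) h)"
  by (induction I rule: infinite_finite_induct) (auto simp: moment_form_add_left)

lemma moment_form_sum_right: "moment_form m h (\<Sum>i\<in>I. F i) = (\<Sum>i\<in>I. moment_form m h (F i))"
  by (induction I rule: infinite_finite_induct) (auto simp: moment_form_add_right)

lemma moment_form_commute:
  assumes "\<And>a b. m a b = m b a"
  shows "moment_form m f g = moment_form m g f"
  unfolding moment_form_def by (subst sum.swap) (simp add: assms algebra_simps)

lemma monic_basis_expansion:
  fixes F :: "nat \<Rightarrow> 'a::field poly"
  assumes monic: "\<And>k. degree (F k) = k \<and> lead_coeff (F k) = 1"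
  shows "\<exists>a. U = (\<Sum>i\<le>degree U. smult (a i) (F i))"
proof (induction "degree U" arbitrary: U rule: less_induct)
  case less
  show ?case
  proof (cases "degree U = 0")
    case True
    then obtain c where U: "U = [:c:]" by (metis degree_eq_zeroE)
    have "F 0 = 1"
      using monic[of 0] by (metis degree_eq_zeroE lead_coeff_pCons(2) one_pCons pCons_0_0)
    then show ?thesis using True U by (intro exI[of _ "\<lambda>_. c"]) simp
  next
    case False
    define d where "d = degree U"
    define V where "V = U - smult (lead_coeff U) (F d)"
    have dF: "degree (F d) = d" "lead_coeff (F d) = 1" using monic[of d] by auto
    have "coeff V d = 0" using dF by (simp add: V_def d_def)
    moreover have "degree V \<le> d"
      using dF unfolding V_def by (metis d_def degree_diff_le degree_smult_le le_refl order_trans)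
    ultimately have "degree V < d"
      using False by (metis d_def degree_0 le_neq_implies_less leading_coeff_0_iff)
    then obtain a where a: "V = (\<Sum>i\<le>degree V. smult (a i) (F i))"
      using less d_def by blast
    define a' where "a' = (\<lambda>i. if i \<le> degree V then a i else 0)(d := lead_coeff U)"
    have "V = (\<Sum>i\<le>degree V. smult (if i \<le> degree V then a i else 0) (F i))"
      by (subst a) (rule sum.cong, auto)
    also have "\<dots> = (\<Sum>i<d. smult (if i \<le> degree V then a i else 0) (F i))"
      by (rule sum_atMost_extend) (use \<open>degree V < d\<close> in auto)
    also have "\<dots> = (\<Sum>i<d. smult (a' i) (F i))" by (intro sum.cong) (auto simp: a'_def)
    finally have "U = (\<Sum>i<d. smult (a' i) (F i)) + smult (a' d) (F d)"
      by (simp add: V_def a'_def)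
    also have "\<dots> = (\<Sum>i\<le>d. smult (a' i) (F i))"
      by (simp add: lessThan_Suc_atMost[symmetric])
    finally show ?thesis using d_def by (intro exI[of _ a']) simp
  qed
qed

lemma monic_basis_expansion_lessThan:
  fixes F :: "nat \<Rightarrow> 'a::field poly"
  assumes monic: "\<And>k. degree (F k) = k \<and> lead_coeff (F k) = 1" and "degree U < n"
  shows "\<exists>u. U = (\<Sum>i<n. smult (u i) (F i))"
proof -
  obtain a where a: "U = (\<Sum>i\<le>degree U. smult (a i) (F i))"
    using monic_basis_expansion[OF monic] by blast
  define u where "u i = (if i \<le> degree U then a i else 0)" for i
  have "U = (\<Sum>i\<le>degree U. smult (u i) (F i))" by (subst a) (auto simp: u_def intro!: sum.cong)
  also have "\<dots> = (\<Sum>i<n. smult (u i) (F i))"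
    by (rule sum.mono_neutral_left) (use \<open>degree U < n\<close> in \<open>auto simp: u_def\<close>)
  finally show ?thesis by blast
qed

lemma monom_Suc_mult: "monom (1::'a::comm_ring_1) (Suc p) * F = monom 1 p * ([:0,1:] * F)"
proof -
  have "monom (1::'a) (Suc p) = monom 1 p * [:0,1:]"
    using mult_monom[of "1::'a" p 1 1] by (simp add: monom_Suc monom_0 one_pCons)
  then show ?thesis by (simp only: mult.assoc)
qed

lemma sum_lessThan_double: "(\<Sum>i<2*n. F i) = (\<Sum>j<n. F (2*j) + F (Suc (2*j)))"
  by (induction n) (simp_all add: add.assoc)

lemma sum_restrict_band:
  fixes F :: "nat \<Rightarrow> 'a::comm_monoid_add"
  assumes "\<And>n. n + r < k \<or> k + r < n \<Longrightarrow> F n = 0" "k + r \<le> D"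
  shows "(\<Sum>n\<le>D. F n) = (\<Sum>n\<in>{k - r .. k + r}. F n)"
proof (rule sum.mono_neutral_right)
  show "\<forall>i\<in>{..D} - {k - r..k + r}. F i = 0"
  proof
    fix i assume "i \<in> {..D} - {k - r..k + r}"
    then have "i + r < k \<or> k + r < i" by auto
    then show "F i = 0" using assms(1) by blast
  qed
qed (use assms in auto)

section \<open>Orthogonal polynomials of a moment form\<close>

locale orthogonal_polys =
  fixes m :: "nat \<Rightarrow> nat \<Rightarrow> real" and P :: "nat \<Rightarrow> real poly" and b c :: "nat \<Rightarrow> real"
  assumes moment_sym: "\<And>i j. m i j = m j i"
    and moment_form_pos: "\<And>f. f \<noteq> 0 \<Longrightarrow> moment_form m f f > 0"
    and monic: "\<And>k. degree (P k) = k \<and> lead_coeff (P k) = 1"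
    and orth: "\<And>j k. j \<noteq> k \<Longrightarrow> moment_form m (P j) (P k) = 0"
    and rec0: "[:0, 1:] * P 0 = P 1 + smult (b 0) (P 0)"
    and rec: "\<And>k. k \<ge> 1 \<Longrightarrow> [:0, 1:] * P k = P (k+1) + smult (b k) (P k) + smult (c k) (P (k-1))"
begin

abbreviation sqnorm :: "nat \<Rightarrow> real" where
  "sqnorm \<equiv> \<lambda>k. moment_form m (P k) (P k)"

lemma P_nonzero: "P k \<noteq> 0"
  using monic[of k] by auto

lemma sqnorm_pos: "sqnorm k > 0"
  using moment_form_pos[OF P_nonzero] .

lemma sqnorm_nonzero: "sqnorm k \<noteq> 0"
  using sqnorm_pos[of k] by simp

lemma form_commute: "moment_form m f g = moment_form m g f"
  by (rule moment_form_commute[OF moment_sym])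

lemma P_expansion: "\<exists>a. U = (\<Sum>i\<le>degree U. smult (a i) (P i))"
  by (rule monic_basis_expansion[OF monic])

lemma form_P_above_degree:
  assumes "degree U < j"
  shows "moment_form m U (P j) = 0"
proof -
  obtain a where a: "U = (\<Sum>i\<le>degree U. smult (a i) (P i))" using P_expansion by blast
  have "moment_form m U (P j) = (\<Sum>i\<le>degree U. a i * moment_form m (P i) (P j))"
    by (subst a) (simp add: moment_form_sum_left moment_form_smult_left)
  also have "\<dots> = 0" using assms by (intro sum.neutral) (auto simp: orth)
  finally show ?thesis .
qed

lemma form_P_coeff:
  assumes U: "U = (\<Sum>i\<le>d. smult (a i) (P i))" and "j \<le> d"
  shows "moment_form m U (P j) = a j * sqnorm j"
proof -
  have "moment_form m U (P j) = (\<Sum>i\<le>d. a i * moment_form m (P i) (P j))"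
    by (subst U) (simp add: moment_form_sum_left moment_form_smult_left)
  also have "\<dots> = a j * sqnorm j"
    by (subst sum.remove[of _ j]) (use \<open>j \<le> d\<close> in \<open>auto simp: orth intro!: sum.neutral\<close>)
  finally show ?thesis .
qed

lemma P_Fourier_expansion: "q = (\<Sum>i\<le>degree q. smult (moment_form m q (P i) / sqnorm i) (P i))"
proof -
  obtain a where a: "q = (\<Sum>i\<le>degree q. smult (a i) (P i))" using P_expansion by blast
  show ?thesis
    using form_P_coeff[OF a] by (subst a) (auto simp: sqnorm_nonzero intro!: sum.cong)
qed

lemma parseval:
  assumes "degree U \<le> D"
  shows "moment_form m U V = (\<Sum>j\<le>D. moment_form m U (P j) * moment_form m V (P j) / sqnorm j)"
proof -
  have "moment_form m U V = (\<Sum>i\<le>degree U. moment_form m U (P i) / sqnorm i * moment_form m (P i) V)"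
    by (subst P_Fourier_expansion) (simp add: moment_form_sum_left moment_form_smult_left)
  also have "\<dots> = (\<Sum>i\<le>D. moment_form m U (P i) * moment_form m V (P i) / sqnorm i)"
    by (rule sum.mono_neutral_cong_left)
      (use assms in \<open>auto simp: form_P_above_degree form_commute[of _ V]\<close>)
  finally show ?thesis .
qed

lemma expand_coeff_eq: "expand_coeff P q j = moment_form m q (P j) / sqnorm j"
proof -
  define a where "a j = moment_form m q (P j) / sqnorm j" for j
  have "expand_coeff P q = a"
    unfolding expand_coeff_def
  proof (rule the_equality)
    show "(\<forall>j. degree q < j \<longrightarrow> a j = 0) \<and> q = (\<Sum>j\<le>degree q. smult (a j) (P j))"
      using P_Fourier_expansion by (auto simp: a_def form_P_above_degree)
  next
    fix a' assume a': "(\<forall>j. degree q < j \<longrightarrow> a' j = 0) \<and> q = (\<Sum>j\<le>degree q. smult (a' j) (P j))"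
    show "a' = a"
    proof
      fix j show "a' j = a j"
        using a' form_P_coeff[of q a' "degree q" j]
        by (cases "j \<le> degree q") (auto simp: a_def sqnorm_nonzero form_P_above_degree)
    qed
  qed
  then show ?thesis by (simp add: a_def)
qed

lemma Acoef_eq: "Acoef P p j k = moment_form m (monom 1 p * P k) (P j) / sqnorm j"
  unfolding Acoef_def expand_coeff_eq ..

lemma Acoef_0: "Acoef P 0 j k = (if j = k then 1 else 0)"
  by (simp add: Acoef_eq orth sqnorm_nonzero)

lemma degree_monom_mult_P: "degree (monom 1 p * P k) = p + k"
  using monic[of k] by (simp add: degree_mult_eq P_nonzero degree_monom_eq)

lemma X_mult_P:
  "[:0,1:] * P a = P (a+1) + smult (b a) (P a) + (if a \<ge> 1 then smult (c a) (P (a-1)) else 0)"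
  using rec0 rec[of a] by (cases "a = 0") auto

lemma form_X_mult_P:
  "moment_form m ([:0,1:] * P a) (P j) =
     (if j = a+1 then sqnorm (a+1) else 0) + (if j = a then b a * sqnorm a else 0)
   + (if a \<ge> 1 \<and> j = a - 1 then c a * sqnorm (a-1) else 0)"
  unfolding X_mult_P by (auto simp: moment_form_add_left moment_form_smult_left orth)

text \<open>The three-term recurrence makes multiplication by \<open>z\<^sup>p\<close> a band operator of width \<open>p\<close>.\<close>

lemma form_monom_mult_P_below: "j + p < k \<Longrightarrow> moment_form m (monom 1 p * P k) (P j) = 0"
proof (induction p arbitrary: k)
  case 0
  then show ?case by (simp add: orth)
next
  case (Suc p)
  then have "k \<ge> 1" by simp
  have "monom 1 (Suc p) * P k = monom 1 p * P (k+1) + smult (b k) (monom 1 p * P k)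
          + smult (c k) (monom 1 p * P (k-1))"
    unfolding monom_Suc_mult rec[OF \<open>k \<ge> 1\<close>] by (simp add: algebra_simps)
  then show ?case using Suc by (simp add: moment_form_add_left moment_form_smult_left)
qed

lemma form_monom_mult_P_above: "k + p < j \<Longrightarrow> moment_form m (monom 1 p * P k) (P j) = 0"
  by (rule form_P_above_degree) (simp add: degree_monom_mult_P)

lemma Acoef_eq_0: "j + p < k \<or> k + p < j \<Longrightarrow> Acoef P p j k = 0"
  using form_monom_mult_P_below form_monom_mult_P_above by (auto simp: Acoef_eq)

lemma form_monom_mult_P_diag:
  "moment_form m (monom 1 p1 * P k) (monom 1 p2 * P k) / sqnorm k =
     (\<Sum>j\<in>{k - min p1 p2 .. k + min p1 p2}. sqnorm j / sqnorm k * Acoef P p1 j k * Acoef P p2 j k)"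
proof -
  have "moment_form m (monom 1 p1 * P k) (monom 1 p2 * P k) =
      (\<Sum>j\<le>k+p1. moment_form m (monom 1 p1 * P k) (P j)
        * moment_form m (monom 1 p2 * P k) (P j) / sqnorm j)"
    by (rule parseval) (simp add: degree_monom_mult_P)
  also have "\<dots> = (\<Sum>j\<le>k+p1. sqnorm j * Acoef P p1 j k * Acoef P p2 j k)"
    by (intro sum.cong refl) (simp add: Acoef_eq sqnorm_nonzero)
  also have "\<dots> = (\<Sum>j\<in>{k - min p1 p2 .. k + min p1 p2}. sqnorm j * Acoef P p1 j k * Acoef P p2 j k)"
    by (rule sum_restrict_band) (auto simp: Acoef_eq_0 min_def split: if_splits)
  finally show ?thesis by (simp add: sum_divide_distrib)
qed

end

section \<open>The skew form and skew-orthogonal polynomials\<close>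

context orthogonal_polys
begin

text \<open>The factor \<open>w - cnj w\<close> of the symplectic weight turns the moment form into this skew form.\<close>

definition skew_form :: "real poly \<Rightarrow> real poly \<Rightarrow> real" where
  "skew_form u v = moment_form m ([:0,1:] * u) v - moment_form m u ([:0,1:] * v)"

definition rho :: "nat \<Rightarrow> real" where
  "rho l = sqnorm (2*l+1) - c (2*l+1) * sqnorm (2*l)"

definition tau :: "nat \<Rightarrow> real" where
  "tau l = sqnorm (2*l+2) - c (2*l+2) * sqnorm (2*l+1)"

lemma rr_eq_rho: "rr sqnorm c k = 2 * rho k"
  by (simp add: rr_def rho_def)

lemma lam_eq_tau_div_rho: "lam sqnorm c l = tau l / rho l"
  by (simp add: lam_def tau_def rho_def)

lemma skew_form_antisym: "skew_form u v = - skew_form v u"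
  by (simp add: skew_form_def form_commute)

lemma skew_form_smult_left: "skew_form (smult a u) w = a * skew_form u w"
  and skew_form_smult_right: "skew_form w (smult a u) = a * skew_form w u"
  unfolding skew_form_def mult_smult_right moment_form_smult_left moment_form_smult_right
  by (simp_all add: algebra_simps)

lemma skew_form_sum_left: "skew_form (\<Sum>i\<in>I. F i) w = (\<Sum>i\<in>I. skew_form (F i) w)"
  and skew_form_sum_right: "skew_form w (\<Sum>i\<in>I. F i) = (\<Sum>i\<in>I. skew_form w (F i))"
  by (simp_all add: skew_form_def moment_form_sum_left moment_form_sum_right
      sum_distrib_left sum_subtractf)

lemma skew_form_P:
  "skew_form (P i) (P j)
    = moment_form m ([:0,1:] * P i) (P j) - moment_form m ([:0,1:] * P j) (P i)"
  unfolding skew_form_def using form_commute[of "P i" "[:0,1:] * P j"] by simp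

lemma skew_form_P_odd:
  "skew_form (P i) (P (Suc (2*n))) =
     (if i = 2*n then rho n else 0) - (if i = Suc (Suc (2*n)) then tau n else 0)"
proof -
  consider "i = 2*n" | "i = 2*n+1" | "i = 2*n+2" | "i \<noteq> 2*n" "i \<noteq> 2*n+1" "i \<noteq> 2*n+2"
    by blast
  then show ?thesis
    unfolding skew_form_P form_X_mult_P by cases (auto simp: rho_def tau_def)
qed

lemma skew_form_P_even_odd:
  "skew_form (P (2*j)) (P (Suc (2*n)))
    = (if j = n then rho n else 0) - (if j = Suc n then tau n else 0)"
  unfolding skew_form_P_odd by auto

lemma skew_form_P_even_even: "skew_form (P (2*i)) (P (2*j)) = 0"
proof -
  have parity: "(2*j = 2*i+1) = False" "(2*i = 2*j+1) = False"
    "(1 \<le> 2*i \<and> 2*j = 2*i - 1) = False" "(1 \<le> 2*j \<and> 2*i = 2*j - 1) = False"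
    by presburger+
  show ?thesis unfolding skew_form_P form_X_mult_P parity if_False by (cases "i = j") simp_all
qed

lemma skew_form_P_odd_odd: "skew_form (P (Suc (2*i))) (P (Suc (2*j))) = 0"
proof -
  have parity: "(Suc (2*j) = Suc (2*i)+1) = False" "(Suc (2*i) = Suc (2*j)+1) = False"
    "(1 \<le> Suc (2*i) \<and> Suc (2*j) = Suc (2*i) - 1) = False"
    "(1 \<le> Suc (2*j) \<and> Suc (2*i) = Suc (2*j) - 1) = False"
    by presburger+
  show ?thesis unfolding skew_form_P form_X_mult_P parity if_False by (cases "i = j") simp_all
qed

lemma skew_form_expansion_P:
  assumes "degree W \<le> D"
  shows "skew_form W F = (\<Sum>i\<le>D. moment_form m W (P i) / sqnorm i * skew_form (P i) F)"
proof -
  have "skew_form W F = (\<Sum>i\<le>degree W. moment_form m W (P i) / sqnorm i * skew_form (P i) F)"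
    by (subst P_Fourier_expansion) (simp add: skew_form_sum_left skew_form_smult_left)
  also have "\<dots> = (\<Sum>i\<le>D. moment_form m W (P i) / sqnorm i * skew_form (P i) F)"
    by (rule sum.mono_neutral_left) (use assms in \<open>auto simp: form_P_above_degree\<close>)
  finally show ?thesis .
qed

lemma skew_form_monom_mult_P_odd:
  "skew_form (monom 1 p * P j) (P (Suc (2*n))) =
     Acoef P p (2*n) j * rho n - Acoef P p (Suc (Suc (2*n))) j * tau n"
proof -
  define D where "D = p + j + 2*n + 2"
  have "skew_form (monom 1 p * P j) (P (Suc (2*n))) =
      (\<Sum>i\<le>D. Acoef P p i j * skew_form (P i) (P (Suc (2*n))))"
    by (subst skew_form_expansion_P[of _ D]) (simp_all add: degree_monom_mult_P D_def Acoef_eq)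
  also have "\<dots> = (\<Sum>i\<le>D. if i = 2*n then Acoef P p i j * rho n else 0)
      - (\<Sum>i\<le>D. if i = Suc (Suc (2*n)) then Acoef P p i j * tau n else 0)"
    by (subst sum_subtractf[symmetric]) (rule sum.cong, auto simp: skew_form_P_odd)
  also have "\<dots> = Acoef P p (2*n) j * rho n - Acoef P p (Suc (Suc (2*n))) j * tau n"
  proof -
    have "2*n \<le> D" "Suc (Suc (2*n)) \<le> D" by (simp_all add: D_def)
    then show ?thesis unfolding sum.delta by simp
  qed
  finally show ?thesis .
qed

end

locale skew_orthogonal_polys = orthogonal_polys +
  assumes rho_nonzero: "\<And>l. rho l \<noteq> 0"
begin

lemma lam_mult_rho: "lam sqnorm c l * rho l = tau l"
  using rho_nonzero by (simp add: lam_eq_tau_div_rho)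

lemma mu_diag: "mu sqnorm c k k = 1"
  by (simp add: mu_def)

lemma mu_eq_lam_mult: "j < k \<Longrightarrow> mu sqnorm c k j = lam sqnorm c j * mu sqnorm c k (Suc j)"
  unfolding mu_def by (simp add: prod.atLeast_Suc_lessThan)

lemma mu_Suc: "j \<le> k \<Longrightarrow> mu sqnorm c (Suc k) j = mu sqnorm c k j * lam sqnorm c k"
  unfolding mu_def by (simp add: prod.atLeastLessThan_Suc)

definition skew_poly :: "nat \<Rightarrow> real poly" where
  "skew_poly n = (if even n then (\<Sum>j\<le>n div 2. smult (mu sqnorm c (n div 2) j) (P (2*j))) else P n)"

lemma skew_poly_odd: "skew_poly (Suc (2*k)) = P (Suc (2*k))"
  by (simp add: skew_poly_def)

lemma skew_poly_even: "skew_poly (2*k) = (\<Sum>j\<le>k. smult (mu sqnorm c k j) (P (2*j)))"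
  by (simp add: skew_poly_def)

lemma skew_poly_monic: "degree (skew_poly n) = n \<and> lead_coeff (skew_poly n) = 1"
proof (cases "odd n \<or> n = 0")
  case True
  then have "skew_poly n = P n" by (elim disjE) (simp_all add: skew_poly_def mu_diag)
  then show ?thesis by (simp only:) (rule monic)
next
  case False
  then obtain k where n: "n = 2*k" and "k \<noteq> 0" by (auto elim: evenE)
  define R where "R = (\<Sum>j<k. smult (mu sqnorm c k j) (P (2*j)))"
  have QR: "skew_poly n = P (2*k) + R"
    unfolding n skew_poly_even R_def
      by (simp add: lessThan_Suc_atMost[symmetric] mu_diag add.commute)
  have "degree R \<le> 2*k - 2"
    unfolding R_def
      by (rule degree_sum_le) (auto intro!: order.trans[OF degree_smult_le] simp: monic)
  then have dR: "degree R < degree (P (2*k))" using \<open>k \<noteq> 0\<close> monic[of "2*k"] by simp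
  have "degree (skew_poly n) = 2*k" using degree_add_eq_left[OF dR] monic[of "2*k"] QR by simp
  moreover have "coeff R (2*k) = 0" using dR monic[of "2*k"] by (simp add: coeff_eq_0)
  moreover have "coeff (P (2*k)) (2*k) = 1" using monic[of "2*k"] by metis
  ultimately show ?thesis using QR n by simp
qed

lemma skew_form_even_odd:
  "skew_form (skew_poly (2*k)) (skew_poly (Suc (2*l))) = (if l = k then rho k else 0)"
proof -
  have "skew_form (skew_poly (2*k)) (skew_poly (Suc (2*l))) =
      (\<Sum>j\<le>k. mu sqnorm c k j * ((if j = l then rho l else 0) - (if j = Suc l then tau l else 0)))"
    by (simp add: skew_poly_even skew_poly_odd skew_form_sum_left skew_form_smult_left
        skew_form_P_even_odd)
  also have "\<dots> = (\<Sum>j\<le>k. mu sqnorm c k j * (if j = l then rho l else 0))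
      - (\<Sum>j\<le>k. mu sqnorm c k j * (if j = Suc l then tau l else 0))"
    by (simp add: sum_subtractf[symmetric] right_diff_distrib)
  also have "\<dots> = (if l \<le> k then mu sqnorm c k l * rho l else 0)
      - (if l + 1 \<le> k then mu sqnorm c k (l+1) * tau l else 0)"
    by (simp add: if_distrib[of "\<lambda>x. _ * x"] sum.delta cong: if_cong)
  also have "\<dots> = (if l = k then rho k else 0)"
  proof (cases "l < k")
    case True
    then show ?thesis using mu_eq_lam_mult[OF True] lam_mult_rho[of l] by (simp add: algebra_simps)
  qed (auto simp: mu_diag)
  finally show ?thesis .
qed

lemma skew_form_even_even: "skew_form (skew_poly (2*i)) (skew_poly (2*j)) = 0"
  by (simp add: skew_poly_even skew_form_sum_left skew_form_sum_right skew_form_smult_left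
      skew_form_smult_right skew_form_P_even_even)

lemma skew_form_odd_odd: "skew_form (skew_poly (Suc (2*i))) (skew_poly (Suc (2*j))) = 0"
  by (simp add: skew_poly_odd skew_form_P_odd_odd)

lemma skew_poly_skew_orth:
  "skew_form (skew_poly i) (skew_poly j) =
     (if even i \<and> j = Suc i then rho (i div 2)
       else if even j \<and> i = Suc j then - rho (j div 2) else 0)"
proof -
  have parity: "2*a \<noteq> Suc (2*a')" "Suc (2*a) \<noteq> Suc (Suc (2*a'))" for a a' :: nat
    by presburger+
  consider (ee) i' j' where "i = 2*i'" "j = 2*j'" | (eo) i' j' where "i = 2*i'" "j = Suc (2*j')"
    | (oe) i' j' where "i = Suc (2*i')" "j = 2*j'" | (oo) i' j' where "i = Suc (2*i')" "j = Suc (2*j')"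
    by (metis evenE oddE Suc_eq_plus1)
  then show ?thesis
  proof cases
    case ee
    then show ?thesis using parity by (simp add: skew_form_even_even)
  next
    case eo
    then show ?thesis by (auto simp: skew_form_even_odd)
  next
    case oe
    then show ?thesis
      using skew_form_even_odd[of j' i'] skew_form_antisym[of "skew_poly i" "skew_poly j"] by auto
  next
    case oo
    then show ?thesis using parity by (simp add: skew_form_odd_odd)
  qed
qed

lemma skew_form_pair: "skew_form (skew_poly (2*k)) (skew_poly (Suc (2*k))) = rho k"
  and skew_form_pair': "skew_form (skew_poly (Suc (2*k))) (skew_poly (2*k)) = - rho k"
  by (simp_all add: skew_poly_skew_orth)

lemma skew_form_orth: "i div 2 \<noteq> j div 2 \<Longrightarrow> skew_form (skew_poly i) (skew_poly j) = 0"
  by (auto simp: skew_poly_skew_orth)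

lemma skew_parseval:
  assumes "degree U < 2 * Suc D"
  shows "skew_form U V =
    (\<Sum>n\<le>D. (skew_form U (skew_poly (2*n)) * skew_form V (skew_poly (Suc (2*n)))
             - skew_form U (skew_poly (Suc (2*n))) * skew_form V (skew_poly (2*n))) / rho n)"
proof -
  obtain u where u: "U = (\<Sum>i<2 * Suc D. smult (u i) (skew_poly i))"
    using monic_basis_expansion_lessThan[OF skew_poly_monic assms] by blast
  have form_U: "skew_form U W = (\<Sum>i<2 * Suc D. u i * skew_form (skew_poly i) W)" for W
    by (subst u) (simp only: skew_form_sum_left skew_form_smult_left)
  have coord_even: "skew_form U (skew_poly (Suc (2*n))) = u (2*n) * rho n" if "n \<le> D" for n
  proof -
    have "skew_form U (skew_poly (Suc (2*n))) = (\<Sum>i<2 * Suc D. if i = 2*n then u i * rho n else 0)"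
      unfolding form_U by (intro sum.cong refl) (auto simp: skew_poly_skew_orth)
    then show ?thesis using that by simp
  qed
  have coord_odd: "skew_form U (skew_poly (2*n)) = - u (Suc (2*n)) * rho n" if "n \<le> D" for n
  proof -
    have "skew_form U (skew_poly (2*n))
        = (\<Sum>i<2 * Suc D. if i = Suc (2*n) then - u i * rho n else 0)"
      unfolding form_U by (intro sum.cong refl) (auto simp: skew_poly_skew_orth; presburger)
    then show ?thesis using that by simp
  qed
  have "skew_form U V = (\<Sum>n\<le>D. - u (2*n) * skew_form V (skew_poly (2*n))
                                 - u (Suc (2*n)) * skew_form V (skew_poly (Suc (2*n))))"
    unfolding form_U sum_lessThan_double lessThan_Suc_atMost
    by (intro sum.cong refl) (simp add: skew_form_antisym[of "skew_poly _" V])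
  also have "\<dots> = (\<Sum>n\<le>D. (skew_form U (skew_poly (2*n)) * skew_form V (skew_poly (Suc (2*n)))
             - skew_form U (skew_poly (Suc (2*n))) * skew_form V (skew_poly (2*n))) / rho n)"
    by (intro sum.cong refl) (simp add: coord_even coord_odd, simp add: field_simps rho_nonzero)
  finally show ?thesis .
qed

lemma skew_form_P_skew_poly_even:
  "skew_form (P i) (skew_poly (2*n)) = (if i = Suc (2*n) then - rho n else 0)"
proof (cases "even i")
  case True
  then obtain i' where "i = 2*i'" by blast
  moreover have "2*i' \<noteq> Suc (2*n)" by presburger
  ultimately show ?thesis
    by (simp add: skew_poly_even skew_form_sum_right skew_form_smult_right skew_form_P_even_even)
next
  case False
  then have "P i = skew_poly i" by (simp add: skew_poly_def)
  then show ?thesis using False by (auto simp: skew_poly_skew_orth)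
qed

lemma skew_form_monom_mult_P_even:
  "skew_form (monom 1 p * P j) (skew_poly (2*n)) = - Acoef P p (Suc (2*n)) j * rho n"
proof -
  define D where "D = p + j + 2*n + 2"
  have "skew_form (monom 1 p * P j) (skew_poly (2*n)) =
      (\<Sum>i\<le>D. Acoef P p i j * skew_form (P i) (skew_poly (2*n)))"
    by (subst skew_form_expansion_P[of _ D]) (simp_all add: degree_monom_mult_P D_def Acoef_eq)
  also have "\<dots> = (\<Sum>i\<le>D. if i = Suc (2*n) then - Acoef P p i j * rho n else 0)"
    by (rule sum.cong) (auto simp: skew_form_P_skew_poly_even)
  also have "\<dots> = - Acoef P p (Suc (2*n)) j * rho n"
  proof -
    have "Suc (2*n) \<le> D" by (simp add: D_def)
    then show ?thesis unfolding sum.delta by simp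
  qed
  finally show ?thesis .
qed

text \<open>The coefficients \<open>B\<close> are, up to the factor \<open>rho n\<close>, the coordinates of \<open>z\<^sup>p q\<^sub>k\<close>
  in the skew-orthogonal basis \<open>q\<^sub>k = skew_poly k\<close>.\<close>

lemma monom_mult_skew_poly_even:
  "monom 1 p * skew_poly (2*k) = (\<Sum>j\<le>k. smult (mu sqnorm c k j) (monom 1 p * P (2*j)))"
  by (simp add: skew_poly_even sum_distrib_left mult_smult_right)

lemma skew_form_B_ee:
  "skew_form (monom 1 p * skew_poly (2*k)) (skew_poly (Suc (2*n)))
    = rho n * B_ee sqnorm c (Acoef P) p n k"
  unfolding monom_mult_skew_poly_even skew_form_sum_left skew_form_smult_left skew_poly_odd
    skew_form_monom_mult_P_odd B_ee_def
  by (simp add: sum_distrib_left sum_distrib_right sum_subtractf[symmetric] lam_mult_rho[symmetric]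
      algebra_simps)

lemma skew_form_B_oe:
  "skew_form (monom 1 p * skew_poly (2*k)) (skew_poly (2*n))
    = - rho n * B_oe sqnorm c (Acoef P) p n k"
  unfolding monom_mult_skew_poly_even skew_form_sum_left skew_form_smult_left
    skew_form_monom_mult_P_even B_oe_def
  by (simp add: sum_distrib_left sum_distrib_right algebra_simps)

lemma skew_form_B_eo:
  "skew_form (monom 1 p * skew_poly (Suc (2*k))) (skew_poly (Suc (2*n)))
    = rho n * B_eo sqnorm c (Acoef P) p n k"
  unfolding skew_poly_odd skew_form_monom_mult_P_odd B_eo_def
  by (simp add: lam_mult_rho[symmetric] algebra_simps)

lemma skew_form_B_oo:
  "skew_form (monom 1 p * skew_poly (Suc (2*k))) (skew_poly (2*n)) = - rho n * B_oo (Acoef P) p n k"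
  unfolding skew_poly_odd[of k] skew_form_monom_mult_P_even B_oo_def by simp

lemma B_oo_eq_0: "n + p div 2 < k \<or> k + p div 2 < n \<Longrightarrow> B_oo (Acoef P) p n k = 0"
  unfolding B_oo_def by (rule Acoef_eq_0) presburger

lemma B_eo_eq_0: "n + (p+1) div 2 < k \<or> k + (p+1) div 2 < n \<Longrightarrow> B_eo sqnorm c (Acoef P) p n k = 0"
proof -
  assume band: "n + (p+1) div 2 < k \<or> k + (p+1) div 2 < n"
  have "Acoef P p (2*n) (2*k+1) = 0" "Acoef P p (2*n+2) (2*k+1) = 0"
    by (rule Acoef_eq_0, use band in presburger)+
  then show ?thesis unfolding B_eo_def by simp
qed

definition pair_moment :: "nat \<Rightarrow> nat \<Rightarrow> nat \<Rightarrow> real" where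
  "pair_moment p1 p2 k =
     skew_form (monom 1 p1 * skew_poly (2*k)) (monom 1 p2 * skew_poly (Suc (2*k)))
   - skew_form (monom 1 p1 * skew_poly (Suc (2*k))) (monom 1 p2 * skew_poly (2*k))"

lemma degree_monom_mult_skew_poly: "degree (monom 1 p * skew_poly n) = p + n"
proof -
  have "skew_poly n \<noteq> 0" using skew_poly_monic[of n] by (metis leading_coeff_0_iff one_neq_zero)
  then show ?thesis using skew_poly_monic[of n] by (simp add: degree_mult_eq degree_monom_eq)
qed

lemma pair_moment_eq: "pair_moment p1 p2 k = rho k * frak_m sqnorm c (Acoef P) p1 p2 k"
proof -
  define D where "D = k + p1 + p2 + 1"
  have deg: "degree (monom 1 p1 * skew_poly (2*k)) < 2 * Suc D"
    "degree (monom 1 p1 * skew_poly (Suc (2*k))) < 2 * Suc D"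
    by (simp_all add: degree_monom_mult_skew_poly D_def)
  have quot: "((- r * x) * (r * y) - (r * z) * (- r * w)) / r = r * (z * w - x * y)" if "r \<noteq> 0"
    for r x y z w :: real using that by (simp add: field_simps)
  define T1 where "T1 n = rho n * (B_oo (Acoef P) p1 n k * B_ee sqnorm c (Acoef P) p2 n k)" for n
  define T2 where "T2 n = rho n * (B_ee sqnorm c (Acoef P) p1 n k * B_oo (Acoef P) p2 n k)" for n
  define T3 where "T3 n
    = rho n * (B_eo sqnorm c (Acoef P) p1 n k * B_oe sqnorm c (Acoef P) p2 n k)" for n
  define T4 where "T4 n
    = rho n * (B_oe sqnorm c (Acoef P) p1 n k * B_eo sqnorm c (Acoef P) p2 n k)" for n
  have "skew_form (monom 1 p1 * skew_poly (2*k)) (monom 1 p2 * skew_poly (Suc (2*k)))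
      = (\<Sum>n\<le>D. T2 n - T4 n)"
    unfolding skew_parseval[OF deg(1)] skew_form_B_ee skew_form_B_oe skew_form_B_eo skew_form_B_oo
    by (rule sum.cong) (simp_all only: quot[OF rho_nonzero] T2_def T4_def right_diff_distrib)
  moreover have "skew_form (monom 1 p1 * skew_poly (Suc (2*k))) (monom 1 p2 * skew_poly (2*k))
      = (\<Sum>n\<le>D. T3 n - T1 n)"
    unfolding skew_parseval[OF deg(2)] skew_form_B_ee skew_form_B_oe skew_form_B_eo skew_form_B_oo
    by (rule sum.cong) (simp_all only: quot[OF rho_nonzero] T3_def T1_def right_diff_distrib)
  ultimately have "pair_moment p1 p2 k = (\<Sum>n\<le>D. T1 n) + (\<Sum>n\<le>D. T2 n) - (\<Sum>n\<le>D. T3 n) - (\<Sum>n\<le>D. T4 n)"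
    unfolding pair_moment_def by (simp add: sum_subtractf)
  also have "(\<Sum>n\<le>D. T1 n) = (\<Sum>n\<in>{k - p1 div 2 .. k + p1 div 2}. T1 n)"
    by (rule sum_restrict_band) (auto simp: T1_def B_oo_eq_0 D_def)
  also have "(\<Sum>n\<le>D. T2 n) = (\<Sum>n\<in>{k - p2 div 2 .. k + p2 div 2}. T2 n)"
    by (rule sum_restrict_band) (auto simp: T2_def B_oo_eq_0 D_def)
  also have "(\<Sum>n\<le>D. T3 n) = (\<Sum>n\<in>{k - (p1+1) div 2 .. k + (p1+1) div 2}. T3 n)"
    by (rule sum_restrict_band) (auto simp: T3_def B_eo_eq_0 D_def)
  also have "(\<Sum>n\<le>D. T4 n) = (\<Sum>n\<in>{k - (p2+1) div 2 .. k + (p2+1) div 2}. T4 n)"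
    by (rule sum_restrict_band) (auto simp: T4_def B_eo_eq_0 D_def)
  moreover have "rho k * (\<Sum>n\<in>R. rr sqnorm c n / rr sqnorm c k * X n * Y n)
      = (\<Sum>n\<in>R. rho n * (X n * Y n))"
    for R X Y unfolding sum_distrib_left by (rule sum.cong) (simp_all add: rr_eq_rho rho_nonzero)
  ultimately show ?thesis
    unfolding frak_m_def right_diff_distrib distrib_left T1_def T2_def T3_def T4_def
    by (simp only: mult.commute)
qed

lemma B_ee_0: "B_ee sqnorm c (Acoef P) 0 n k = (if n = k then 1 else 0)"
proof -
  have parity: "(Suc (Suc (2*n)) = 2*j) = (j = Suc n)" for j by presburger
  have "B_ee sqnorm c (Acoef P) 0 n k = (if n \<le> k then mu sqnorm c k n else 0)
      - lam sqnorm c n * (if Suc n \<le> k then mu sqnorm c k (Suc n) else 0)"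
    unfolding B_ee_def Acoef_0
      by (simp add: parity if_distrib[of "\<lambda>x. _ * x"] sum.delta cong: if_cong)
  also have "\<dots> = (if n = k then 1 else 0)"
  proof (cases "n < k")
    case True then show ?thesis using mu_eq_lam_mult[OF True] by simp
  qed (auto simp: mu_diag)
  finally show ?thesis .
qed

lemma frak_m_holomorphic:
  "frak_m sqnorm c (Acoef P) q 0 k
    = Acoef P q (Suc (2*k)) (Suc (2*k)) + B_ee sqnorm c (Acoef P) q k k"
proof -
  have parity: "(Suc (2*n) = 2*j) = False" "(2*j = Suc (2*n)) = False" for n j :: nat by presburger+
  have "(\<Sum>n\<in>{k - q div 2 .. k + q div 2}. rr sqnorm c n / rr sqnorm c k * B_oo (Acoef P) q n k
           * B_ee sqnorm c (Acoef P) 0 n k) = Acoef P q (Suc (2*k)) (Suc (2*k))"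
    unfolding B_ee_0
    by (simp add: if_distrib[of "\<lambda>x. _ * x"] sum.delta rr_eq_rho rho_nonzero B_oo_def cong: if_cong)
  moreover have "B_oe sqnorm c (Acoef P) 0 n k = 0" for n
    unfolding B_oe_def Acoef_0 by (simp add: parity)
  moreover have "B_eo sqnorm c (Acoef P) 0 k k = 0" "B_oo (Acoef P) 0 k k = 1"
    unfolding B_eo_def B_oo_def Acoef_0 by simp_all
  ultimately show ?thesis unfolding frak_m_def by (simp add: rr_eq_rho rho_nonzero)
qed

text \<open>The holomorphic moments telescope, because \<open>B_ee\<close> on the diagonal is a difference of
  consecutive partial sums \<open>\<Sum>j\<le>k. mu k j * A (2k) (2j)\<close>.\<close>

lemma sum_frak_m_holomorphic:
  "(\<Sum>k<N. frak_m sqnorm c (Acoef P) q 0 k) =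
     (\<Sum>i<2*N. Acoef P q i i) - (\<Sum>j<N. mu sqnorm c N j * Acoef P q (2*N) (2*j))"
proof -
  define T where "T k = (\<Sum>j\<le>k. mu sqnorm c k j * Acoef P q (2*k) (2*j))" for k
  have B_diag: "B_ee sqnorm c (Acoef P) q k k
      = T k - T (Suc k) + Acoef P q (2 * Suc k) (2 * Suc k)" for k
  proof -
    have "lam sqnorm c k * (\<Sum>j\<le>k. mu sqnorm c k j * Acoef P q (2*k+2) (2*j))
        = (\<Sum>j\<le>k. mu sqnorm c (Suc k) j * Acoef P q (2 * Suc k) (2*j))"
      by (simp add: sum_distrib_left mu_Suc algebra_simps)
    also have "\<dots> = T (Suc k) - Acoef P q (2 * Suc k) (2 * Suc k)"
      by (simp add: T_def mu_diag)
    finally show ?thesis unfolding B_ee_def T_def[of k] by simp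
  qed
  have "(\<Sum>k<N. frak_m sqnorm c (Acoef P) q 0 k) =
      (\<Sum>k<N. Acoef P q (Suc (2*k)) (Suc (2*k))) + (\<Sum>k<N. Acoef P q (2 * Suc k) (2 * Suc k))
      + (\<Sum>k<N. T k - T (Suc k))"
    by (simp add: frak_m_holomorphic B_diag sum.distrib[symmetric] algebra_simps)
  also have "(\<Sum>k<N. T k - T (Suc k)) = T 0 - T N" by (rule sum_lessThan_telescope')
  also have "T 0 = Acoef P q 0 0" by (simp add: T_def mu_diag)
  also have "T N = (\<Sum>j<N. mu sqnorm c N j * Acoef P q (2*N) (2*j)) + Acoef P q (2*N) (2*N)"
    by (simp add: T_def mu_diag lessThan_Suc_atMost[symmetric])
  also have "(\<Sum>k<N. Acoef P q (2 * Suc k) (2 * Suc k))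
      = (\<Sum>k<Suc N. Acoef P q (2*k) (2*k)) - Acoef P q 0 0"
    by (subst sum.lessThan_Suc_shift) simp
  finally show ?thesis by (simp add: sum_lessThan_double sum.distrib)
qed

end

section \<open>Determinants of monic polynomial bases\<close>

abbreviation perms :: "nat \<Rightarrow> (nat \<Rightarrow> nat) set" where
  "perms n \<equiv> {\<sigma>. \<sigma> permutes {..<n}}"

definition vandermonde_det :: "(nat \<Rightarrow> 'a::comm_ring_1 poly) \<Rightarrow> nat \<Rightarrow> (nat \<Rightarrow> 'a) \<Rightarrow> 'a" where
  "vandermonde_det F n x = (\<Sum>\<sigma>\<in>perms n. of_int (sign \<sigma>) * (\<Prod>i<n. poly (F (\<sigma> i)) (x i)))"

lemma vandermonde_det_eq_0:
  fixes F :: "nat \<Rightarrow> 'a::field_char_0 poly"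
  assumes ij: "i < n" "j < n" "i \<noteq> j" and xij: "x i = x j"
  shows "vandermonde_det F n x = 0"
proof -
  define t where "t = Transposition.transpose i j"
  have tp: "t permutes {..<n}" unfolding t_def by (rule permutes_swap_id) (use ij in auto)
  define f where "f \<sigma> = of_int (sign \<sigma>) * (\<Prod>l<n. poly (F (\<sigma> l)) (x l))" for \<sigma>
  have "vandermonde_det F n x = (\<Sum>\<sigma>\<in>perms n. f (\<sigma> \<circ> t))"
    unfolding vandermonde_det_def f_def[symmetric] by (rule sum_permutations_compose_right[OF tp])
  also have "\<dots> = (\<Sum>\<sigma>\<in>perms n. - f \<sigma>)"
  proof (rule sum.cong[OF refl])
    fix \<sigma> assume "\<sigma> \<in> perms n"
    then have \<sigma>: "\<sigma> permutes {..<n}" by simp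
    have sg: "sign (\<sigma> \<circ> t) = - sign \<sigma>"
      using sign_compose[OF permutes_imp_permutation[OF _ \<sigma>] permutes_imp_permutation[OF _ tp]]
        sign_swap_id[of i j] ij by (simp add: t_def)
    have tt: "t (t l) = l" for l by (simp add: t_def)
    have xt: "x (t l) = x l" for l using xij by (cases "l = i"; cases "l = j") (simp_all add: t_def)
    have "(\<Prod>l<n. poly (F ((\<sigma> \<circ> t) l)) (x l)) = (\<Prod>l<n. poly (F (\<sigma> (t l))) (x (t (t l))))"
      by (simp add: tt)
    also have "\<dots> = (\<Prod>l<n. poly (F (\<sigma> l)) (x (t l)))"
      by (rule prod.reindex_bij_betw[OF permutes_imp_bij[OF tp],
          where g = "\<lambda>l. poly (F (\<sigma> l)) (x (t l))"])
    also have "\<dots> = (\<Prod>l<n. poly (F (\<sigma> l)) (x l))" by (simp add: xt)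
    finally show "f (\<sigma> \<circ> t) = - f \<sigma>" unfolding f_def sg by simp
  qed
  finally have "vandermonde_det F n x = - vandermonde_det F n x"
    by (simp add: sum_negf vandermonde_det_def f_def)
  then show ?thesis by simp
qed

text \<open>The determinant as a polynomial in the last point: it vanishes at the other points, which
  drives the induction in \<open>vandermonde_det_eq_prod\<close>.\<close>

definition vandermonde_det_poly :: "(nat \<Rightarrow> 'a::comm_ring_1 poly) \<Rightarrow> nat \<Rightarrow> (nat \<Rightarrow> 'a) \<Rightarrow> 'a poly" where
  "vandermonde_det_poly F n x = (\<Sum>\<sigma>\<in>perms (Suc n).
      smult (of_int (sign \<sigma>) * (\<Prod>i<n. poly (F (\<sigma> i)) (x i))) (F (\<sigma> n)))"

lemma vandermonde_det_Suc:
  "vandermonde_det F (Suc n) (x(n := t)) = poly (vandermonde_det_poly F n x) t"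
  unfolding vandermonde_det_def vandermonde_det_poly_def poly_sum
  by (intro sum.cong refl) (simp add: algebra_simps)

lemma vandermonde_det_Suc': "vandermonde_det F (Suc n) x = poly (vandermonde_det_poly F n x) (x n)"
  using vandermonde_det_Suc[of F n x "x n"] by simp

lemma permutes_lessThan_Suc_fixed: "{\<sigma>. \<sigma> permutes {..<Suc n} \<and> \<sigma> n = n} = perms n"
proof (intro set_eqI iffI; simp)
  fix \<sigma> assume H: "\<sigma> permutes {..<Suc n} \<and> \<sigma> n = n"
  show "\<sigma> permutes {..<n}" by (rule permutes_superset[OF H[THEN conjunct1]]) (use H in auto)
next
  fix \<sigma> assume H: "\<sigma> permutes {..<n}"
  show "\<sigma> permutes {..<Suc n} \<and> \<sigma> n = n"
    using permutes_subset[OF H, of "{..<Suc n}"] permutes_not_in[OF H, of n] by auto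
qed

lemma vandermonde_det_poly_degree_coeff:
  assumes monic: "\<And>k. degree (F k) = k \<and> lead_coeff (F k) = 1"
  shows "degree (vandermonde_det_poly F n x) \<le> n"
    "coeff (vandermonde_det_poly F n x) n = vandermonde_det F n x"
proof -
  have sn: "\<sigma> n \<le> n" if "\<sigma> permutes {..<Suc n}" for \<sigma>
    using permutes_in_image[OF that, of n] by auto
  show "degree (vandermonde_det_poly F n x) \<le> n"
    unfolding vandermonde_det_poly_def
    by (rule degree_sum_le)
      (auto intro!: order.trans[OF degree_smult_le] simp: monic sn finite_permutations)
  have cf: "coeff (F (\<sigma> n)) n = (if \<sigma> n = n then 1 else 0)" if "\<sigma> permutes {..<Suc n}" for \<sigma>
  proof (cases "\<sigma> n = n")
    case True then show ?thesis using monic[of n] by (metis)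
  next
    case False
    then have "\<sigma> n < n" using sn[OF that] by simp
    then show ?thesis using monic[of "\<sigma> n"] False by (simp add: coeff_eq_0)
  qed
  have "coeff (vandermonde_det_poly F n x) n = (\<Sum>\<sigma>\<in>perms (Suc n).
      if \<sigma> n = n then of_int (sign \<sigma>) * (\<Prod>i<n. poly (F (\<sigma> i)) (x i)) else 0)"
    unfolding vandermonde_det_poly_def coeff_sum by (intro sum.cong refl) (simp add: cf)
  also have "\<dots> = (\<Sum>\<sigma>\<in>{\<sigma>. \<sigma> permutes {..<Suc n} \<and> \<sigma> n = n}.
      of_int (sign \<sigma>) * (\<Prod>i<n. poly (F (\<sigma> i)) (x i)))"
  proof -
    have fin: "finite (perms (Suc n))" by (rule finite_permutations) simp
    show ?thesis
      by (subst sum.inter_filter[symmetric]) (use fin in \<open>auto simp: Collect_conj_eq[symmetric]\<close>)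
  qed
  also have "\<dots> = vandermonde_det F n x" unfolding permutes_lessThan_Suc_fixed vandermonde_det_def ..
  finally show "coeff (vandermonde_det_poly F n x) n = vandermonde_det F n x" .
qed

lemma prod_pairs_lessThan_Suc:
  "(\<Prod>j<Suc n. \<Prod>k\<in>{j<..<Suc n}. f j k) = (\<Prod>j<n. \<Prod>k\<in>{j<..<n}. f j k) * (\<Prod>j<n. f j n)"
proof -
  have "(\<Prod>j<Suc n. \<Prod>k\<in>{j<..<Suc n}. f j k) = (\<Prod>j<n. \<Prod>k\<in>{j<..<Suc n}. f j k)"
  proof -
    have "{n<..<Suc n} = {}" by auto
    then show ?thesis by simp
  qed
  also have "\<dots> = (\<Prod>j<n. (\<Prod>k\<in>{j<..<n}. f j k) * f j n)"
  proof (intro prod.cong refl)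
    fix j assume "j \<in> {..<n}"
    then have "{j<..<Suc n} = insert n {j<..<n}" by auto
    then show "(\<Prod>k\<in>{j<..<Suc n}. f j k) = (\<Prod>k\<in>{j<..<n}. f j k) * f j n" by (simp add: mult.commute)
  qed
  also have "\<dots> = (\<Prod>j<n. \<Prod>k\<in>{j<..<n}. f j k) * (\<Prod>j<n. f j n)" by (rule prod.distrib)
  finally show ?thesis .
qed

lemma vandermonde_det_poly_eq:
  fixes F :: "nat \<Rightarrow> 'a::field_char_0 poly"
  assumes monic: "\<And>k. degree (F k) = k \<and> lead_coeff (F k) = 1" and "inj_on x {..<n}"
  shows "vandermonde_det_poly F n x = smult (vandermonde_det F n x) (\<Prod>i<n. [:- x i, 1:])"
proof (rule poly_eqI_degree_lead_coeff[where n = n and A = "x ` {..<n}"])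
  let ?L = "\<Prod>i<n. [:- x i, 1:]"
  have L: "degree ?L = n" "coeff ?L n = 1"
  proof -
    have "lead_coeff ?L = 1" unfolding lead_coeff_prod by simp
    moreover show "degree ?L = n" by (subst degree_prod_eq_sum_degree) auto
    ultimately show "coeff ?L n = 1" by simp
  qed
  show "coeff (vandermonde_det_poly F n x) n = coeff (smult (vandermonde_det F n x) ?L) n"
    using vandermonde_det_poly_degree_coeff(2)[OF monic] L by simp
  show "n \<le> card (x ` {..<n})" using card_image[OF \<open>inj_on x {..<n}\<close>] by simp
  show "degree (vandermonde_det_poly F n x) \<le> n" by (rule vandermonde_det_poly_degree_coeff(1)[OF monic])
  show "degree (smult (vandermonde_det F n x) ?L) \<le> n" using L degree_smult_le by metis
next
  fix z assume "z \<in> x ` {..<n}"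
  then obtain i where i: "i < n" "z = x i" by auto
  have "poly (vandermonde_det_poly F n x) z = vandermonde_det F (Suc n) (x(n := x i))"
    using vandermonde_det_Suc[of F n x "x i"] by (simp add: i)
  also have "\<dots> = 0" by (rule vandermonde_det_eq_0[of i _ n]) (use i in auto)
  moreover have "poly (smult (vandermonde_det F n x) (\<Prod>i<n. [:- x i, 1:])) z = 0"
    using i by (auto simp: poly_prod)
  ultimately show "poly (vandermonde_det_poly F n x) z
      = poly (smult (vandermonde_det F n x) (\<Prod>i<n. [:- x i, 1:])) z"
    by simp
qed

definition vandermonde_prod :: "nat \<Rightarrow> (nat \<Rightarrow> 'a::comm_ring_1) \<Rightarrow> 'a" where
  "vandermonde_prod n x = (\<Prod>j<n. \<Prod>k\<in>{j<..<n}. x k - x j)"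

lemma vandermonde_prod_Suc: "vandermonde_prod (Suc n) x = vandermonde_prod n x * (\<Prod>j<n. x n - x j)"
  unfolding vandermonde_prod_def by (rule prod_pairs_lessThan_Suc)

lemma vandermonde_prod_eq_0:
  assumes "i < n" "j < n" "i \<noteq> j" "x i = x j"
  shows "vandermonde_prod n x = 0"
proof -
  define a b where "a = min i j" and "b = max i j"
  have ab: "a < b \<and> b < n \<and> x a = x b"
    using assms by (cases rule: linorder_cases[of i j]) (auto simp: a_def b_def)
  then have "(\<Prod>k\<in>{a<..<n}. (x k - x a)) = 0" by (intro prod_zero) (auto intro!: bexI[of _ b])
  moreover have "a \<in> {..<n}" using ab by simp
  ultimately show ?thesis unfolding vandermonde_prod_def by (intro prod_zero) auto
qed

lemma vandermonde_det_eq_prod: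
  fixes F :: "nat \<Rightarrow> 'a::field_char_0 poly"
  assumes monic: "\<And>k. degree (F k) = k \<and> lead_coeff (F k) = 1"
  shows "vandermonde_det F n x = vandermonde_prod n x"
proof (induction n arbitrary: x)
  case 0
  have "perms 0 = {id}" by (auto simp: permutes_empty)
  then show ?case by (simp add: vandermonde_det_def vandermonde_prod_def)
next
  case (Suc n)
  show ?case
  proof (cases "inj_on x {..<n}")
    case True
    have "vandermonde_det F (Suc n) x = vandermonde_det F n x * (\<Prod>i<n. x n - x i)"
      unfolding vandermonde_det_Suc' vandermonde_det_poly_eq[OF monic True] by (simp add: poly_prod)
    then show ?thesis unfolding vandermonde_prod_Suc Suc.IH by simp
  next
    case False
    then obtain i j where ij: "i < n" "j < n" "i \<noteq> j" "x i = x j" by (auto simp: inj_on_def)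
    then have "vandermonde_det F (Suc n) x = 0" by (intro vandermonde_det_eq_0[OF _ _ ij(3,4)]) auto
    moreover have "vandermonde_prod (Suc n) x = 0"
      using ij by (intro vandermonde_prod_eq_0[of i _ j]) auto
    ultimately show ?thesis by simp
  qed
qed

section \<open>Sums over permutations\<close>

lemma permutes_eq_if_agree_except:
  assumes \<sigma>: "\<sigma> permutes S" and \<tau>: "\<tau> permutes S" and eq: "\<And>j. j \<in> S \<Longrightarrow> j \<noteq> m \<Longrightarrow> \<sigma> j = \<tau> j"
  shows "\<sigma> = \<tau>"
proof
  fix j show "\<sigma> j = \<tau> j"
  proof (cases "j \<in> S")
    case False then show ?thesis using permutes_not_in[OF \<sigma>] permutes_not_in[OF \<tau>] by simp
  next
    case True
    show ?thesis
    proof (cases "j = m")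
      case False then show ?thesis using eq True by simp
    next
      case jm: True
      have "\<sigma> j \<in> S" using True permutes_in_image[OF \<sigma>] by simp
      then obtain j' where j': "j' \<in> S" "\<tau> j' = \<sigma> j" using permutes_image[OF \<tau>] by (metis imageE)
      show ?thesis
      proof (cases "j' = m")
        case True then show ?thesis using j' jm by simp
      next
        case False
        then have "\<sigma> j' = \<sigma> j" using eq[OF j'(1)] j' by simp
        then have "j' = j" using permutes_inj[OF \<sigma>] by (simp add: inj_eq)
        then show ?thesis using False jm by simp
      qed
    qed
  qed
qed

text \<open>Andreief's identity in the case where the one-point integrals are diagonal off one row.\<close>

lemma sum_perms_pairs_diagonal:
  fixes M :: "nat \<Rightarrow> nat \<Rightarrow> nat \<Rightarrow> 'a::comm_ring_1"
  assumes supp: "\<And>j a b. j < N \<Longrightarrow> j \<noteq> m \<Longrightarrow> a \<noteq> b \<Longrightarrow> M j a b = 0"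
  shows "(\<Sum>\<sigma>\<in>perms N. \<Sum>\<tau>\<in>perms N. of_int (sign \<sigma>) * of_int (sign \<tau>) * (\<Prod>j<N. M j (\<sigma> j) (\<tau> j)))
       = (\<Sum>\<sigma>\<in>perms N. \<Prod>j<N. M j (\<sigma> j) (\<sigma> j))"
proof (rule sum.cong[OF refl])
  fix \<sigma> assume "\<sigma> \<in> perms N"
  then have \<sigma>: "\<sigma> permutes {..<N}" by simp
  have fin: "finite (perms N)" by (rule finite_permutations) simp
  have z: "of_int (sign \<sigma>) * of_int (sign \<tau>) * (\<Prod>j<N. M j (\<sigma> j) (\<tau> j)) = 0"
    if "\<tau> \<in> perms N - {\<sigma>}" for \<tau>
  proof -
    from that have \<tau>: "\<tau> permutes {..<N}" and ne: "\<tau> \<noteq> \<sigma>" by auto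
    have "\<exists>j\<in>{..<N}. j \<noteq> m \<and> \<sigma> j \<noteq> \<tau> j"
      using permutes_eq_if_agree_except[OF \<sigma> \<tau>] ne by blast
    then obtain j where "j < N" "j \<noteq> m" "\<sigma> j \<noteq> \<tau> j" by auto
    then have "(\<Prod>j<N. M j (\<sigma> j) (\<tau> j)) = 0" by (intro prod_zero) (auto intro!: bexI[of _ j] supp)
    then show ?thesis by simp
  qed
  have "(\<Sum>\<tau>\<in>perms N. of_int (sign \<sigma>) * of_int (sign \<tau>) * (\<Prod>j<N. M j (\<sigma> j) (\<tau> j)))
      = of_int (sign \<sigma>) * of_int (sign \<sigma>) * (\<Prod>j<N. M j (\<sigma> j) (\<sigma> j))"
    using \<sigma> by (subst sum.remove[OF fin, of \<sigma>]) (auto simp: sum.neutral z)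
  also have "\<dots> = (\<Prod>j<N. M j (\<sigma> j) (\<sigma> j))"
    by (simp flip: of_int_mult)
  finally show "(\<Sum>\<tau>\<in>perms N. of_int (sign \<sigma>) * of_int (sign \<tau>) * (\<Prod>j<N. M j (\<sigma> j) (\<tau> j)))
      = (\<Prod>j<N. M j (\<sigma> j) (\<sigma> j))" .
qed

lemma sum_perms_prod_const:
  fixes h :: "nat \<Rightarrow> 'a::comm_semiring_1"
  shows "(\<Sum>\<sigma>\<in>perms N. \<Prod>j<N. h (\<sigma> j)) = of_nat (fact N) * (\<Prod>k<N. h k)"
proof -
  have "(\<Prod>j<N. h (\<sigma> j)) = (\<Prod>k<N. h k)" if "\<sigma> permutes {..<N}" for \<sigma>
    by (rule prod.reindex_bij_betw[OF permutes_imp_bij[OF that]])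
  then show ?thesis by (simp add: card_permutations)
qed

lemma sum_perms_prod_insert:
  fixes F h :: "nat \<Rightarrow> 'a::field"
  assumes h: "\<And>k. k < N \<Longrightarrow> h k \<noteq> 0"
  shows "(\<Sum>m<N. \<Sum>\<sigma>\<in>perms N. \<Prod>j<N. if j = m then F (\<sigma> j) else h (\<sigma> j))
         = of_nat (fact N) * (\<Prod>k<N. h k) * (\<Sum>k<N. F k / h k)"
proof -
  have insert: "(\<Prod>j<N. if j = m then F (\<sigma> j) else h (\<sigma> j)) = (\<Prod>k<N. h k) * (F (\<sigma> m) / h (\<sigma> m))"
    if \<sigma>: "\<sigma> permutes {..<N}" and m: "m < N" for \<sigma> m
  proof -
    have "h (\<sigma> m) \<noteq> 0" using h permutes_in_image[OF \<sigma>] m by simp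
    moreover have "(\<Prod>j<N. if j = m then F (\<sigma> j) else h (\<sigma> j))
        = F (\<sigma> m) * (\<Prod>j\<in>{..<N} - {m}. h (\<sigma> j))"
      using m by (subst prod.remove[of _ m]) (auto intro!: prod.cong)
    moreover have "(\<Prod>k<N. h k) = h (\<sigma> m) * (\<Prod>j\<in>{..<N} - {m}. h (\<sigma> j))"
      using m prod.reindex_bij_betw[OF permutes_imp_bij[OF \<sigma>], of h]
        by (subst (asm) prod.remove[of _ m]) auto
    ultimately show ?thesis by (simp add: field_simps)
  qed
  have "(\<Sum>m<N. \<Sum>\<sigma>\<in>perms N. \<Prod>j<N. if j = m then F (\<sigma> j) else h (\<sigma> j))
      = (\<Sum>\<sigma>\<in>perms N. (\<Prod>k<N. h k) * (\<Sum>m<N. F (\<sigma> m) / h (\<sigma> m)))"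
    by (subst sum.swap) (auto intro!: sum.cong simp: insert sum_distrib_left)
  also have "\<dots> = (\<Sum>\<sigma>\<in>perms N. (\<Prod>k<N. h k) * (\<Sum>k<N. F k / h k))"
    by (intro sum.cong refl arg_cong[where f = "\<lambda>x. _ * x"]
      sum.reindex_bij_betw permutes_imp_bij) simp
  finally show ?thesis by (simp add: card_permutations)
qed

lemma div2_eq_cases: "x div 2 = b \<Longrightarrow> y div 2 = b \<Longrightarrow> z div 2 = b \<Longrightarrow> x \<noteq> y \<Longrightarrow> z = x \<or> z = y"
  for x y z b :: nat by presburger

lemma div2_less: "(x::nat) < 2*N \<Longrightarrow> x div 2 < N" by presburger

lemma nat_eq_double_div2: "(x::nat) = 2*(x div 2) + (if odd x then 1 else 0)"
  by (cases "odd x") (simp_all add: odd_two_times_div_two_succ)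

lemma div2_eq_other: fixes x y :: nat assumes "x div 2 = y div 2" "x \<noteq> y"
  shows "y = 2*(x div 2) + (if odd x then 0 else 1)"
proof -
  have y: "y = 2*(y div 2) + (if odd y then 1 else 0)" by (rule nat_eq_double_div2)
  have x: "x = 2*(x div 2) + (if odd x then 1 else 0)" by (rule nat_eq_double_div2)
  have "odd x \<noteq> odd y" using x y assms by (metis)
  then show ?thesis using y assms(1) by (cases "odd x") auto
qed

lemma double_plus_bit_inject: "2*x + r = 2*y + s \<Longrightarrow> r < 2 \<Longrightarrow> s < 2 \<Longrightarrow> x = y \<and> r = s"
  for x y r s :: nat by presburger

text \<open>The points \<open>2j\<close> and \<open>2j+1\<close> form the \<open>j\<close>-th pair, and \<open>{2b, 2b+1}\<close> is the \<open>b\<close>-th block.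
  \<open>pair_perm N \<pi> E\<close> sends pair \<open>j\<close> onto block \<open>\<pi> j\<close>, swapping the two points iff \<open>j \<in> E\<close>;
  these are exactly the \<open>block_perms N\<close>.\<close>

definition pair_perm :: "nat \<Rightarrow> (nat \<Rightarrow> nat) \<Rightarrow> nat set \<Rightarrow> nat \<Rightarrow> nat" where
  "pair_perm N \<pi> E a = (if a < 2*N then 2 * \<pi> (a div 2) +
    (if a div 2 \<in> E then 1 - a mod 2 else a mod 2) else a)"

definition block_perms :: "nat \<Rightarrow> (nat \<Rightarrow> nat) set" where
  "block_perms N = {\<sigma>. \<sigma> permutes {..<2*N} \<and> (\<forall>j<N. \<sigma> (2*j) div 2 = \<sigma> (Suc (2*j)) div 2)}"

lemma pair_perm_even: "j < N \<Longrightarrow> pair_perm N \<pi> E (2*j) = 2 * \<pi> j + (if j \<in> E then 1 else 0)"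
  by (simp add: pair_perm_def)

lemma pair_perm_odd: "j < N \<Longrightarrow> pair_perm N \<pi> E (Suc (2*j)) = 2 * \<pi> j + (if j \<in> E then 0 else 1)"
  by (simp add: pair_perm_def)

lemma pair_perm_permutes:
  assumes \<pi>: "\<pi> permutes {..<N}"
  shows "pair_perm N \<pi> E permutes {..<2*N}"
proof (rule inj_imp_permutes)
  define r where "r a = (if a div 2 \<in> E then 1 - a mod 2 else a mod 2)" for a :: nat
  have r2: "r a < 2" for a by (simp add: r_def; linarith)
  have s: "a < 2*N \<Longrightarrow> pair_perm N \<pi> E a = 2 * \<pi> (a div 2) + r a" for a
    by (simp add: pair_perm_def r_def)
  show "inj_on (pair_perm N \<pi> E) {..<2*N}"
  proof (rule inj_onI)
    fix a a' assume a: "a \<in> {..<2*N}" "a' \<in> {..<2*N}"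
      and eq: "pair_perm N \<pi> E a = pair_perm N \<pi> E a'"
    from eq a have "2 * \<pi> (a div 2) + r a = 2 * \<pi> (a' div 2) + r a'" by (simp add: s)
    from double_plus_bit_inject[OF this r2 r2]
      have e1: "\<pi> (a div 2) = \<pi> (a' div 2)"
      and e2: "r a = r a'" by auto
    from e1 have d: "a div 2 = a' div 2" using permutes_inj[OF \<pi>] by (simp add: inj_eq)
    with e2 have "a mod 2 = a' mod 2" unfolding r_def by (auto split: if_splits)
    with d show "a = a'" by (metis div_mult_mod_eq)
  qed
  show "pair_perm N \<pi> E x \<in> {..<2*N}" if "x \<in> {..<2*N}" for x
  proof -
    have "x div 2 < N" using that by auto
    then have "\<pi> (x div 2) < N" using permutes_in_image[OF \<pi>] by simp
    then show ?thesis using that s r2[of x] by simp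
  qed
  show "pair_perm N \<pi> E i = i" if "i \<notin> {..<2*N}" for i using that by (simp add: pair_perm_def)
qed simp

lemma pair_perm_block_perms: "\<pi> permutes {..<N} \<Longrightarrow> pair_perm N \<pi> E \<in> block_perms N"
  unfolding block_perms_def using pair_perm_permutes by (auto simp: pair_perm_even pair_perm_odd)

lemma inj_on_pair_perm: "inj_on (\<lambda>(\<pi>, E). pair_perm N \<pi> E) (perms N \<times> Pow {..<N})"
proof (rule inj_onI, clarsimp)
  fix \<pi> E \<pi>' E' assume \<pi>: "\<pi> permutes {..<N}" and \<pi>': "\<pi>' permutes {..<N}"
    and E: "E \<subseteq> {..<N}" and E': "E' \<subseteq> {..<N}" and eq: "pair_perm N \<pi> E = pair_perm N \<pi>' E'"
  have j: "\<pi> j = \<pi>' j \<and> (j \<in> E \<longleftrightarrow> j \<in> E')" if "j < N" for j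
  proof -
    have "2 * \<pi> j + (if j \<in> E then 1 else 0) = 2 * \<pi>' j + (if j \<in> E' then 1 else 0)"
      using fun_cong[OF eq, of "2*j"] that by (simp add: pair_perm_even)
    from double_plus_bit_inject[OF this] show ?thesis by (cases "j \<in> E"; cases "j \<in> E'") auto
  qed
  show "\<pi> = \<pi>' \<and> E = E'"
  proof
    show "\<pi> = \<pi>'"
    proof
      fix j show "\<pi> j = \<pi>' j"
        using j[of j] permutes_not_in[OF \<pi>, of j] permutes_not_in[OF \<pi>', of j]
          by (cases "j < N") auto
    qed
    show "E = E'" using j E E' by blast
  qed
qed

lemma block_perm_base_permutes:
  assumes "\<sigma> \<in> block_perms N"
  shows "(\<lambda>j. if j < N then \<sigma> (2*j) div 2 else j) permutes {..<N}" (is "?\<pi> permutes _")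
proof (rule inj_imp_permutes)
  have \<sigma>: "\<sigma> permutes {..<2*N}" and pairs: "\<And>j. j < N \<Longrightarrow> \<sigma> (2*j) div 2 = \<sigma> (Suc (2*j)) div 2"
    using assms by (auto simp: block_perms_def)
  show "inj_on ?\<pi> {..<N}"
  proof (rule inj_onI)
    fix j k assume jk: "j \<in> {..<N}" "k \<in> {..<N}" "?\<pi> j = ?\<pi> k"
    have "\<sigma> (2*j) \<noteq> \<sigma> (Suc (2*j))" using permutes_inj[OF \<sigma>] by (simp add: inj_eq)
    with jk have "\<sigma> (2*k) = \<sigma> (2*j) \<or> \<sigma> (2*k) = \<sigma> (Suc (2*j))"
      using div2_eq_cases[OF refl pairs[of j, symmetric], of "\<sigma> (2*k)"] by simp
    then have "2*k = 2*j \<or> 2*k = Suc (2*j)" using permutes_inj[OF \<sigma>] by (auto simp: inj_eq)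
    then show "j = k" by presburger
  qed
  show "?\<pi> j \<in> {..<N}" if "j \<in> {..<N}" for j
    using that permutes_in_image[OF \<sigma>, of "2*j"] by auto
qed auto

lemma block_perms_eq_pair_perm:
  assumes "\<sigma> \<in> block_perms N"
  shows "\<sigma> = pair_perm N (\<lambda>j. if j < N then \<sigma> (2*j) div 2 else j) {j. j < N \<and> odd (\<sigma> (2*j))}"
    (is "_ = pair_perm N ?\<pi> ?E")
proof
  have \<sigma>: "\<sigma> permutes {..<2*N}" and pairs: "\<And>j. j < N \<Longrightarrow> \<sigma> (2*j) div 2 = \<sigma> (Suc (2*j)) div 2"
    using assms by (auto simp: block_perms_def)
  fix a show "\<sigma> a = pair_perm N ?\<pi> ?E a"
  proof (cases "a < 2*N")
    case False
    then show ?thesis using permutes_not_in[OF \<sigma>, of a] by (simp add: pair_perm_def)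
  next
    case True
    define j where "j = a div 2"
    have "j < N" using True by (simp add: j_def)
    have "\<sigma> (2*j) \<noteq> \<sigma> (Suc (2*j))" using permutes_inj[OF \<sigma>] by (simp add: inj_eq)
    then have odd: "\<sigma> (Suc (2*j)) = 2 * (\<sigma> (2*j) div 2) + (if odd (\<sigma> (2*j)) then 0 else 1)"
      by (rule div2_eq_other[OF pairs[OF \<open>j < N\<close>]])
    have "a = 2*j \<or> a = Suc (2*j)" unfolding j_def by presburger
    then show ?thesis
    proof
      assume "a = 2*j"
      then show ?thesis
        using \<open>j < N\<close> nat_eq_double_div2[of "\<sigma> (2*j)"] by (simp add: pair_perm_even)
    next
      assume "a = Suc (2*j)"
      then show ?thesis using \<open>j < N\<close> odd by (simp add: pair_perm_odd)
    qed
  qed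
qed

lemma pair_perm_image: "(\<lambda>(\<pi>, E). pair_perm N \<pi> E) ` (perms N \<times> Pow {..<N}) = block_perms N"
proof
  show "(\<lambda>(\<pi>, E). pair_perm N \<pi> E) ` (perms N \<times> Pow {..<N}) \<subseteq> block_perms N"
    using pair_perm_block_perms by auto
  show "block_perms N \<subseteq> (\<lambda>(\<pi>, E). pair_perm N \<pi> E) ` (perms N \<times> Pow {..<N})"
  proof
    fix \<sigma> assume "\<sigma> \<in> block_perms N"
    then show "\<sigma> \<in> (\<lambda>(\<pi>, E). pair_perm N \<pi> E) ` (perms N \<times> Pow {..<N})"
      using block_perm_base_permutes block_perms_eq_pair_perm
      by (intro image_eqI[of _ _
          "(\<lambda>j. if j < N then \<sigma> (2*j) div 2 else j, {j. j < N \<and> odd (\<sigma> (2*j))})"])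
        auto
  qed
qed

lemma sum_block_perms:
  "(\<Sum>\<sigma>\<in>block_perms N. f \<sigma>) = (\<Sum>\<pi>\<in>perms N. \<Sum>E\<in>Pow {..<N}. f (pair_perm N \<pi> E))"
proof -
  have "(\<Sum>\<sigma>\<in>block_perms N. f \<sigma>) = (\<Sum>x\<in>perms N \<times> Pow {..<N}. f ((\<lambda>(\<pi>, E). pair_perm N \<pi> E) x))"
    unfolding pair_perm_image[symmetric]
      by (subst sum.reindex[OF inj_on_pair_perm]) (simp add: comp_def)
  also have "\<dots> = (\<Sum>\<pi>\<in>perms N. \<Sum>E\<in>Pow {..<N}. f (pair_perm N \<pi> E))"
    by (subst sum.cartesian_product) (simp add: case_prod_unfold)
  finally show ?thesis .
qed

lemma sign_pair_perm_id:
  assumes "E \<subseteq> {..<N}"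
  shows "sign (pair_perm N id E) = (-1) ^ card E"
proof -
  have "finite E" using assms finite_subset by blast
  then show ?thesis using assms
  proof (induction E rule: finite_induct)
    case empty
    have e: "pair_perm N id {} = id" by (auto simp: pair_perm_def)
    show ?case by (simp only: e sign_id) simp
  next
    case (insert j E)
    define t where "t = Transposition.transpose (2*j) (Suc (2*j))"
    have jN: "j < N" using insert by auto
    have eq: "pair_perm N id (insert j E) = pair_perm N id E \<circ> t"
    proof
      fix a show "pair_perm N id (insert j E) a = (pair_perm N id E \<circ> t) a"
      proof (cases "a = 2*j \<or> a = Suc (2*j)")
        case True
        then show ?thesis using jN insert(2) by (auto simp: t_def pair_perm_def)
      next
        case False
        then have "t a = a" by (simp add: t_def)
        moreover have "a div 2 \<noteq> j" using False by presburger
        ultimately show ?thesis by (simp add: pair_perm_def)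
      qed
    qed
    have p1: "permutation (pair_perm N id E)"
      by (rule permutes_imp_permutation[OF _ pair_perm_permutes]) (simp_all add: permutes_id)
    have p2: "permutation t" unfolding t_def by (rule permutation_swap_id)
    have ih: "sign (pair_perm N id E) = (-1) ^ card E" using insert.prems by (intro insert.IH) auto
    have st: "sign t = -1" by (simp add: t_def sign_swap_id)
    have "sign (pair_perm N id (insert j E)) = sign (pair_perm N id E) * sign t"
      unfolding eq by (rule sign_compose[OF p1 p2])
    also have "\<dots> = (-1) ^ card E * (-1)" by (simp only: ih st)
    also have "\<dots> = (-1) ^ card (insert j E)" using insert(1,2) by simp
    finally show ?case .
  qed
qed

lemma transpose_double:
  assumes r2: "r < (2::nat)"
  shows "Transposition.transpose (2*a) (2*b)
          (Transposition.transpose (Suc (2*a)) (Suc (2*b)) (2*c + r))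
       = 2 * Transposition.transpose a b c + r"
proof -
  have e: "(2*c + r = Suc (2*a)) \<longleftrightarrow> (c = a \<and> r = 1)" "(2*c + r = Suc (2*b)) \<longleftrightarrow> (c = b \<and> r = 1)"
    "(2*c + r = 2*a) \<longleftrightarrow> (c = a \<and> r = 0)" "(2*c + r = 2*b) \<longleftrightarrow> (c = b \<and> r = 0)"
    "(Suc (2*b) = 2*a) = False" "(Suc (2*a) = 2*b) = False"
      "(Suc (2*a) = 2*a) = False" "(Suc (2*b) = 2*b) = False"
    using r2 by presburger+
  have r01: "r = 0 \<or> r = 1" using r2 by auto
  show ?thesis
    unfolding transpose_def e using r01 by (cases "c = a"; cases "c = b") auto
qed

lemma sign_pair_perm_empty:
  assumes "\<pi> permutes {..<N}"
  shows "sign (pair_perm N \<pi> {}) = 1"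
  using assms finite_lessThan[of N]
proof (induction rule: permutes_induct)
  case id
  have e: "pair_perm N id {} = id" by (auto simp: pair_perm_def)
  show ?case by (simp only: e sign_id)
next
  case (swap a b p)
  define T where "T = Transposition.transpose (2*a) (2*b)
      \<circ> Transposition.transpose (Suc (2*a)) (Suc (2*b))"
  have ab: "a < N" "b < N" "a \<noteq> b" using swap by auto
  have eq: "pair_perm N (Transposition.transpose a b \<circ> p) {} = T \<circ> pair_perm N p {}"
  proof
    fix x show "pair_perm N (Transposition.transpose a b \<circ> p) {} x = (T \<circ> pair_perm N p {}) x"
    proof (cases "x < 2*N")
      case False
      then have "x \<noteq> 2*a" "x \<noteq> 2*b" "x \<noteq> Suc (2*a)" "x \<noteq> Suc (2*b)" using ab by auto
      then show ?thesis using False by (simp add: pair_perm_def T_def)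
    next
      case True
      define c where "c = p (x div 2)"
      define r where "r = x mod 2"
      have r2: "r < 2" by (simp add: r_def)
      have "pair_perm N p {} x = 2 * c + r" using True by (simp add: pair_perm_def c_def r_def)
      moreover have "pair_perm N (Transposition.transpose a b \<circ> p) {} x
        = 2 * Transposition.transpose a b c + r"
        using True by (simp add: pair_perm_def c_def r_def)
      ultimately show ?thesis by (simp add: T_def transpose_double[OF r2])
    qed
  qed
  have pT1: "permutation (Transposition.transpose (2*a) (2*b))" by (rule permutation_swap_id)
  have pT2: "permutation (Transposition.transpose (Suc (2*a)) (Suc (2*b)))"
    by (rule permutation_swap_id)
  have sT: "sign T = 1"
    unfolding T_def using ab by (simp add: sign_compose[OF pT1 pT2] sign_swap_id)
  have pT: "permutation T" unfolding T_def by (rule permutation_compose[OF pT1 pT2])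
  have pS: "permutation (pair_perm N p {})"
    by (rule permutes_imp_permutation[OF _ pair_perm_permutes[OF swap(4)]]) simp
  show ?case unfolding eq sign_compose[OF pT pS] sT using swap by simp
qed

lemma sign_pair_perm:
  assumes \<pi>: "\<pi> permutes {..<N}" and E: "E \<subseteq> {..<N}"
  shows "sign (pair_perm N \<pi> E) = (-1) ^ card E"
proof -
  have eq: "pair_perm N \<pi> E = pair_perm N \<pi> {} \<circ> pair_perm N id E"
  proof
    fix a show "pair_perm N \<pi> E a = (pair_perm N \<pi> {} \<circ> pair_perm N id E) a"
    proof (cases "a < 2*N")
      case False then show ?thesis by (simp add: pair_perm_def)
    next
      case True
      define r where "r = (if a div 2 \<in> E then 1 - a mod 2 else a mod 2)"
      have r2: "r < 2" by (simp add: r_def; linarith)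
      have i: "pair_perm N id E a = 2 * (a div 2) + r" using True by (simp add: pair_perm_def r_def)
      have "2 * (a div 2) + r < 2 * N" using True r2 by presburger
      moreover have "(2 * (a div 2) + r) div 2 = a div 2" "(2 * (a div 2) + r) mod 2 = r" using r2
        by simp_all
      ultimately show ?thesis using True by (simp add: i pair_perm_def r_def)
    qed
  qed
  have p1: "permutation (pair_perm N \<pi> {})"
    by (rule permutes_imp_permutation[OF _ pair_perm_permutes[OF \<pi>]]) simp
  have p2: "permutation (pair_perm N id E)"
    by (rule permutes_imp_permutation[OF _ pair_perm_permutes]) (simp_all add: permutes_id)
  show ?thesis
    unfolding eq sign_compose[OF p1 p2] sign_pair_perm_empty[OF \<pi>] sign_pair_perm_id[OF E] by simp
qed

lemma block_perm_pair_block_unique: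
  assumes \<sigma>: "\<sigma> permutes {..<2*N}" and pair: "\<sigma> (2*k) div 2 = \<sigma> (Suc (2*k)) div 2"
    and hit: "\<sigma> (2*k') div 2 = \<sigma> (2*k) div 2 \<or> \<sigma> (Suc (2*k')) div 2 = \<sigma> (2*k) div 2"
  shows "k' = k"
proof -
  have "\<sigma> (2*k) \<noteq> \<sigma> (Suc (2*k))" using permutes_inj[OF \<sigma>] by (simp add: inj_eq)
  then have "\<sigma> c = \<sigma> (2*k) \<or> \<sigma> c = \<sigma> (Suc (2*k))" if "\<sigma> c div 2 = \<sigma> (2*k) div 2" for c
    using div2_eq_cases[OF refl pair[symmetric] that] by simp
  then have "\<sigma> (2*k') = \<sigma> (2*k) \<or> \<sigma> (2*k') = \<sigma> (Suc (2*k))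
           \<or> \<sigma> (Suc (2*k')) = \<sigma> (2*k) \<or> \<sigma> (Suc (2*k')) = \<sigma> (Suc (2*k))"
    using hit by blast
  then have "2*k' = 2*k \<or> 2*k' = Suc (2*k) \<or> Suc (2*k') = 2*k \<or> Suc (2*k') = Suc (2*k)"
    using permutes_inj[OF \<sigma>] by (auto simp: inj_eq)
  then show ?thesis by presburger
qed

text \<open>Counting blocks: the \<open>N - 1\<close> matched pairs fill \<open>N - 1\<close> blocks, leaving a single block
  for the two remaining points.\<close>

lemma block_perm_remaining_pair:
  assumes \<sigma>: "\<sigma> permutes {..<2*N}"
    and pairs: "\<And>j. j < N \<Longrightarrow> j \<noteq> m \<Longrightarrow> \<sigma> (2*j) div 2 = \<sigma> (Suc (2*j)) div 2"
    and "m < N"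
  shows "\<sigma> (2*m) div 2 = \<sigma> (Suc (2*m)) div 2"
proof -
  define S where "S = {..<N} - {m}"
  define f where "f k = \<sigma> (2*k) div 2" for k
  have unique: "k' = k" if "k \<in> S" "f k' = f k \<or> \<sigma> (Suc (2*k')) div 2 = f k" for k k'
  proof -
    have "k < N" "k \<noteq> m" using \<open>k \<in> S\<close> by (auto simp: S_def)
    then show ?thesis
      using block_perm_pair_block_unique[OF \<sigma> pairs[OF \<open>k < N\<close> \<open>k \<noteq> m\<close>]] that(2)
      by (simp add: f_def)
  qed
  have "inj_on f S"
  proof (rule inj_onI)
    fix k k' assume "k \<in> S" "k' \<in> S" "f k = f k'"
    then show "k = k'" using unique[of k' k] by simp
  qed
  moreover have sub: "f ` S \<subseteq> {..<N}"
  proof (rule image_subsetI)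
    fix k assume "k \<in> S"
    then have "\<sigma> (2*k) < 2*N" using permutes_in_image[OF \<sigma>, of "2*k"] by (simp add: S_def)
    then show "f k \<in> {..<N}" by (simp add: f_def div2_less)
  qed
  ultimately have "card ({..<N} - f ` S) = 1"
    using card_Diff_subset[OF finite_subset[OF sub finite_lessThan] sub] card_image[of f S] \<open>m < N\<close>
    by (simp add: S_def)
  then obtain z where z: "{..<N} - f ` S = {z}" by (metis card_1_singletonE)
  have "f m \<notin> f ` S" "\<sigma> (Suc (2*m)) div 2 \<notin> f ` S"
    using unique[of _ m] by (auto simp: S_def)
  moreover have "f m < N" "\<sigma> (Suc (2*m)) div 2 < N"
    using permutes_in_image[OF \<sigma>, of "2*m"] permutes_in_image[OF \<sigma>, of "Suc (2*m)"] \<open>m < N\<close>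
    by (auto simp: f_def)
  ultimately have "f m = z" "\<sigma> (Suc (2*m)) div 2 = z" using z by blast+
  then show ?thesis by (simp add: f_def)
qed

lemma sum_perms_double_block_perms:
  fixes G :: "nat \<Rightarrow> nat \<Rightarrow> nat \<Rightarrow> 'a::comm_ring_1"
  assumes supp: "\<And>j a b. j < N \<Longrightarrow> j \<noteq> m \<Longrightarrow> a div 2 \<noteq> b div 2 \<Longrightarrow> G j a b = 0"
  shows "(\<Sum>\<sigma>\<in>perms (2*N). of_int (sign \<sigma>) * (\<Prod>j<N. G j (\<sigma> (2*j)) (\<sigma> (Suc (2*j)))))
       = (\<Sum>\<sigma>\<in>block_perms N. of_int (sign \<sigma>) * (\<Prod>j<N. G j (\<sigma> (2*j)) (\<sigma> (Suc (2*j)))))"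
proof (rule sum.mono_neutral_right)
  show "finite (perms (2*N))" by (rule finite_permutations) simp
  show "block_perms N \<subseteq> perms (2*N)" by (auto simp: block_perms_def)
  show "\<forall>\<sigma>\<in>perms (2*N) - block_perms N. of_int (sign \<sigma>) * (\<Prod>j<N. G j (\<sigma> (2*j)) (\<sigma> (Suc (2*j)))) = 0"
  proof
    fix \<sigma> assume "\<sigma> \<in> perms (2*N) - block_perms N"
    then have \<sigma>: "\<sigma> permutes {..<2*N}" and "\<not> (\<forall>j<N. \<sigma> (2*j) div 2 = \<sigma> (Suc (2*j)) div 2)"
      by (auto simp: block_perms_def)
    then obtain j where "j < N" "j \<noteq> m" "\<sigma> (2*j) div 2 \<noteq> \<sigma> (Suc (2*j)) div 2"
      using block_perm_remaining_pair[OF \<sigma>, of m] by blast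
    then have "(\<Prod>j<N. G j (\<sigma> (2*j)) (\<sigma> (Suc (2*j)))) = 0"
      by (intro prod_zero) (auto intro!: bexI[of _ j] supp)
    then show "of_int (sign \<sigma>) * (\<Prod>j<N. G j (\<sigma> (2*j)) (\<sigma> (Suc (2*j)))) = 0" by simp
  qed
qed

lemma sum_pair_perm_swaps:
  fixes G :: "nat \<Rightarrow> nat \<Rightarrow> nat \<Rightarrow> 'a::comm_ring_1"
  assumes \<pi>: "\<pi> permutes {..<N}"
  shows "(\<Sum>E\<in>Pow {..<N}. of_int (sign (pair_perm N \<pi> E))
            * (\<Prod>j<N. G j (pair_perm N \<pi> E (2*j)) (pair_perm N \<pi> E (Suc (2*j)))))
       = (\<Prod>j<N. G j (2 * \<pi> j) (Suc (2 * \<pi> j)) - G j (Suc (2 * \<pi> j)) (2 * \<pi> j))"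
proof -
  define f1 where "f1 j = - G j (Suc (2 * \<pi> j)) (2 * \<pi> j)" for j
  define f2 where "f2 j = G j (2 * \<pi> j) (Suc (2 * \<pi> j))" for j
  have summand: "of_int (sign (pair_perm N \<pi> E))
        * (\<Prod>j<N. G j (pair_perm N \<pi> E (2*j)) (pair_perm N \<pi> E (Suc (2*j))))
      = (\<Prod>j\<in>E. f1 j) * (\<Prod>j\<in>{..<N} - E. f2 j)" if E: "E \<subseteq> {..<N}" for E
  proof -
    have "(\<Prod>j<N. G j (pair_perm N \<pi> E (2*j)) (pair_perm N \<pi> E (Suc (2*j))))
        = (\<Prod>j<N. if j \<in> E then G j (Suc (2 * \<pi> j)) (2 * \<pi> j) else f2 j)"
      by (intro prod.cong refl) (simp add: pair_perm_even pair_perm_odd f2_def)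
    also have "\<dots> = (\<Prod>j\<in>E. G j (Suc (2 * \<pi> j)) (2 * \<pi> j)) * (\<Prod>j\<in>{..<N} - E. f2 j)"
    proof -
      have "{..<N} \<inter> {j. j \<in> E} = E" "{..<N} \<inter> - {j. j \<in> E} = {..<N} - E" using E by auto
      then show ?thesis by (simp add: prod.If_cases)
    qed
    finally show ?thesis
      unfolding sign_pair_perm[OF \<pi> E] f1_def prod_uminus by (simp add: mult.assoc)
  qed
  have "(\<Prod>j<N. G j (2 * \<pi> j) (Suc (2 * \<pi> j)) - G j (Suc (2 * \<pi> j)) (2 * \<pi> j))
      = (\<Prod>j<N. f1 j + f2 j)" by (simp add: f1_def f2_def)
  also have "\<dots> = (\<Sum>E\<in>Pow {..<N}. (\<Prod>j\<in>E. f1 j) * (\<Prod>j\<in>{..<N} - E. f2 j))"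
    by (rule prod_add) simp
  finally show ?thesis by (simp add: summand)
qed

text \<open>De Bruijn's integration formula in the case where the one-point integrals vanish across
  blocks off one row: only pair-preserving permutations contribute, and summing over which pairs
  are swapped antisymmetrises each factor.\<close>

lemma de_Bruijn_sum:
  fixes G :: "nat \<Rightarrow> nat \<Rightarrow> nat \<Rightarrow> 'a::comm_ring_1"
  assumes "\<And>j a b. j < N \<Longrightarrow> j \<noteq> m \<Longrightarrow> a div 2 \<noteq> b div 2 \<Longrightarrow> G j a b = 0"
  shows "(\<Sum>\<sigma>\<in>perms (2*N). of_int (sign \<sigma>) * (\<Prod>j<N. G j (\<sigma> (2*j)) (\<sigma> (Suc (2*j)))))
       = (\<Sum>\<pi>\<in>perms N. \<Prod>j<N. G j (2 * \<pi> j) (Suc (2 * \<pi> j)) - G j (Suc (2 * \<pi> j)) (2 * \<pi> j))"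
proof -
  have "(\<Sum>\<sigma>\<in>perms (2*N). of_int (sign \<sigma>) * (\<Prod>j<N. G j (\<sigma> (2*j)) (\<sigma> (Suc (2*j)))))
      = (\<Sum>\<pi>\<in>perms N. \<Sum>E\<in>Pow {..<N}. of_int (sign (pair_perm N \<pi> E))
            * (\<Prod>j<N. G j (pair_perm N \<pi> E (2*j)) (pair_perm N \<pi> E (Suc (2*j)))))"
    by (rule trans[OF sum_perms_double_block_perms[OF assms] sum_block_perms])
  then show ?thesis by (simp add: sum_pair_perm_swaps)
qed

abbreviation cpoly :: "real poly \<Rightarrow> complex poly" where
  "cpoly \<equiv> map_poly complex_of_real"

lemma cpoly_mult: "cpoly (f * g) = cpoly f * cpoly g"
  by (rule poly_eqI) (simp add: coeff_map_poly coeff_mult)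

lemma poly_cpoly_monom_mult: "poly (cpoly (monom 1 p * u)) w = w ^ p * poly (cpoly u) w"
  by (simp add: cpoly_mult map_poly_monom poly_monom)

lemma poly_cpoly_X_mult: "poly (cpoly ([:0,1:] * u)) w = w * poly (cpoly u) w"
  using poly_cpoly_monom_mult[of 1 u w] by (simp add: monom_Suc monom_0 one_pCons)

lemma poly_cpoly_pCons_0: "poly (cpoly (pCons 0 u)) w = w * poly (cpoly u) w"
  by (simp add: map_poly_pCons)

lemma cnj_poly_cpoly: "cnj (poly (cpoly u) z) = poly (cpoly u) (cnj z)"
  by (rule poly_cnj_real) (simp add: coeff_map_poly)

lemma cpoly_monic:
  assumes "degree u = k \<and> lead_coeff u = 1"
  shows "degree (cpoly u) = k \<and> lead_coeff (cpoly u) = 1"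
proof -
  have "coeff u k = 1" using assms by metis
  then show ?thesis using assms by (simp add: degree_map_poly coeff_map_poly)
qed

lemma poly_cpoly_altdef: "poly (cpoly u) w = (\<Sum>a\<le>degree u. complex_of_real (coeff u a) * w ^ a)"
  by (simp add: poly_altdef degree_map_poly coeff_map_poly)

lemma product_sigma_finite_dA: "product_sigma_finite (\<lambda>_::nat. dA)"
proof -
  have "sigma_finite_measure dA"
    unfolding dA_def
    using sigma_finite_measure.sigma_finite_iff_density_finite'[OF sigma_finite_lborel,
        of "\<lambda>_. ennreal (1 / pi)"]
    by simp
  then show ?thesis unfolding product_sigma_finite_def by simp
qed

lemma confM_integral_prod:
  fixes \<phi> :: "nat \<Rightarrow> complex \<Rightarrow> complex"
  assumes "\<And>j. j < N \<Longrightarrow> integrable dA (\<phi> j)"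
  shows "integrable (confM N) (\<lambda>z. \<Prod>j<N. \<phi> j (z j))"
    and "(\<integral>z. (\<Prod>j<N. \<phi> j (z j)) \<partial>confM N) = (\<Prod>j<N. integral\<^sup>L dA (\<phi> j))"
  unfolding confM_def
  using product_sigma_finite.product_integrable_prod[OF product_sigma_finite_dA, of "{..<N}" \<phi>]
    product_sigma_finite.product_integral_prod[OF product_sigma_finite_dA, of "{..<N}" \<phi>] assms
  by auto

lemma confM_integral_sum_prod:
  fixes T :: "'s \<Rightarrow> nat \<Rightarrow> complex \<Rightarrow> complex"
  assumes "\<And>s j. integrable dA (T s j)"
  shows "integrable (confM N) (\<lambda>z. \<Sum>s\<in>S. c s * (\<Prod>j<N. T s j (z j)))"
    and "(\<integral>z. (\<Sum>s\<in>S. c s * (\<Prod>j<N. T s j (z j))) \<partial>confM N)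
         = (\<Sum>s\<in>S. c s * (\<Prod>j<N. integral\<^sup>L dA (T s j)))"
proof -
  have *: "integrable (confM N) (\<lambda>z. \<Prod>j<N. T s j (z j))" for s
    by (rule confM_integral_prod(1)) (rule assms)
  then show "integrable (confM N) (\<lambda>z. \<Sum>s\<in>S. c s * (\<Prod>j<N. T s j (z j)))"
    by simp
  show "(\<integral>z. (\<Sum>s\<in>S. c s * (\<Prod>j<N. T s j (z j))) \<partial>confM N)
         = (\<Sum>s\<in>S. c s * (\<Prod>j<N. integral\<^sup>L dA (T s j)))"
    using * by (simp add: Bochner_Integration.integral_sum confM_integral_prod(2) assms)
qed

definition point_monomial :: "nat \<Rightarrow> nat \<Rightarrow> nat \<Rightarrow> nat \<Rightarrow> (nat \<Rightarrow> complex) \<Rightarrow> complex" where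
  "point_monomial N m p1 p2 z = (if m < N then z m ^ p1 * cnj (z m) ^ p2 else 1)"

text \<open>For \<open>m \<ge> N\<close> nothing is inserted, so the hypotheses at \<open>m = N\<close> give the normalisation.\<close>

lemma ens_expect_power_sum:
  fixes W :: "(nat \<Rightarrow> complex) \<Rightarrow> real" and F h :: "nat \<Rightarrow> complex"
  assumes integrable:
    "\<And>m. integrable (confM N) (\<lambda>z. complex_of_real (W z) * point_monomial N m p1 p2 z)"
    and integral: "\<And>m. (\<integral>z. complex_of_real (W z) * point_monomial N m p1 p2 z \<partial>confM N)
          = (\<Sum>\<pi>\<in>perms N. \<Prod>j<N. if j = m then F (\<pi> j) else h (\<pi> j))"
    and h: "\<And>k. k < N \<Longrightarrow> h k \<noteq> 0"
  shows "ens_expect N W (power_sum p1 p2 N) = (\<Sum>k<N. F k / h k)"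
proof -
  have "power_sum p1 p2 N z * complex_of_real (W z)
      = (\<Sum>m<N. complex_of_real (W z) * point_monomial N m p1 p2 z)" for z
    unfolding power_sum_def point_monomial_def sum_distrib_right
    by (intro sum.cong refl) (simp add: mult.commute)
  then have "(\<integral>z. power_sum p1 p2 N z * complex_of_real (W z) \<partial>confM N)
      = (\<integral>z. (\<Sum>m<N. complex_of_real (W z) * point_monomial N m p1 p2 z) \<partial>confM N)"
    by (intro Bochner_Integration.integral_cong) simp_all
  also have "\<dots> = (\<Sum>m<N. \<integral>z. complex_of_real (W z) * point_monomial N m p1 p2 z \<partial>confM N)"
    by (rule Bochner_Integration.integral_sum) (rule integrable)
  finally have num: "(\<integral>z. power_sum p1 p2 N z * complex_of_real (W z) \<partial>confM N)
      = (\<Sum>m<N. \<Sum>\<pi>\<in>perms N. \<Prod>j<N. if j = m then F (\<pi> j) else h (\<pi> j))"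
    by (simp only: integral)
  have den: "complex_of_real (\<integral>z. W z \<partial>confM N) = (\<Sum>\<pi>\<in>perms N. \<Prod>j<N. h (\<pi> j))"
    using integral[of N] by (simp add: point_monomial_def)
  have "(\<Prod>k<N. h k) \<noteq> 0" using h by simp
  then show ?thesis
    using sum_perms_prod_insert[where F = F and h = h and N = N, OF h]
      sum_perms_prod_const[where h = h and N = N]
    unfolding ens_expect_def num den by simp
qed

lemma prod_lessThan_double: "(\<Prod>i<2*n. F i) = (\<Prod>j<n. F (2*j) * F (Suc (2*j)))"
  by (induction n) (simp_all add: mult.assoc)

lemma prod_pairs_double:
  fixes f :: "nat \<Rightarrow> nat \<Rightarrow> 'a::comm_monoid_mult"
  shows "(\<Prod>a<2*N. \<Prod>b\<in>{a<..<2*N}. f a b) =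
    (\<Prod>j<N. f (2*j) (Suc (2*j)) * (\<Prod>k\<in>{j<..<N}. f (2*j) (2*k) * f (Suc (2*j)) (2*k)
                                         * f (2*j) (Suc (2*k)) * f (Suc (2*j)) (Suc (2*k))))"
proof (induction N)
  case (Suc N)
  define Y where "Y j k = f (2*j) (2*k) * f (Suc (2*j)) (2*k)
    * f (2*j) (Suc (2*k)) * f (Suc (2*j)) (Suc (2*k))"
    for j k
  have "(\<Prod>a<2 * Suc N. \<Prod>b\<in>{a<..<2 * Suc N}. f a b)
      = (\<Prod>a<Suc (Suc (2*N)). \<Prod>b\<in>{a<..<Suc (Suc (2*N))}. f a b)"
    by simp
  also have "\<dots> = (\<Prod>a<2*N. \<Prod>b\<in>{a<..<2*N}. f a b) * (\<Prod>a<2*N. f a (2*N))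
        * ((\<Prod>a<2*N. f a (Suc (2*N))) * f (2*N) (Suc (2*N)))"
    unfolding prod_pairs_lessThan_Suc by simp
  also have "\<dots> = (\<Prod>a<2*N. \<Prod>b\<in>{a<..<2*N}. f a b) * (f (2*N) (Suc (2*N)) * (\<Prod>j<N. Y j N))"
    unfolding prod_lessThan_double Y_def by (simp add: prod.distrib mult_ac)
  also have "\<dots> = (\<Prod>j<Suc N. f (2*j) (Suc (2*j)) * (\<Prod>k\<in>{j<..<Suc N}. Y j k))"
    unfolding Suc.IH Y_def[symmetric] prod.distrib prod_pairs_lessThan_Suc by (simp add: mult_ac)
  finally show ?case unfolding Y_def .
qed simp

section \<open>The ensembles as Vandermonde products\<close>

lemma weightC_eq_vandermonde:
  "complex_of_real (weightC \<omega> N z) =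
     vandermonde_prod N z * cnj (vandermonde_prod N z) * (\<Prod>j<N. complex_of_real (\<omega> (z j)))"
proof -
  have "(\<Prod>j<N. \<Prod>k\<in>{j<..<N}. (cmod (z j - z k))\<^sup>2) = (cmod (vandermonde_prod N z))\<^sup>2"
    unfolding vandermonde_prod_def prod_norm[symmetric] prod_power_distrib
    by (simp add: norm_minus_commute)
  then have "complex_of_real (weightC \<omega> N z)
      = complex_of_real ((cmod (vandermonde_prod N z))\<^sup>2) * complex_of_real (\<Prod>j<N. \<omega> (z j))"
    by (simp add: weightC_def)
  then show ?thesis by (simp only: complex_norm_square of_real_prod)
qed

definition interleave_cnj :: "(nat \<Rightarrow> complex) \<Rightarrow> nat \<Rightarrow> complex" where
  "interleave_cnj z a = (if even a then z (a div 2) else cnj (z (a div 2)))"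

lemma interleave_cnj_even [simp]: "interleave_cnj z (2*j) = z j"
  and interleave_cnj_odd [simp]: "interleave_cnj z (Suc (2*j)) = cnj (z j)"
  by (simp_all add: interleave_cnj_def)

lemma weightH_eq_vandermonde:
  "complex_of_real (weightH \<omega> N z) =
     vandermonde_prod (2*N) (interleave_cnj z)
       * (\<Prod>j<N. (z j - cnj (z j)) * complex_of_real (\<omega> (z j)))"
proof -
  define Y where "Y j k = (z k - z j) * (z k - cnj (z j))
    * (cnj (z k) - z j) * (cnj (z k) - cnj (z j))"
    for j k
  define e where "e j = (z j - cnj (z j)) * complex_of_real (\<omega> (z j))" for j
  have pair: "complex_of_real ((cmod (z j - z k))\<^sup>2)
    * complex_of_real ((cmod (z j - cnj (z k)))\<^sup>2)
    = Y j k"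
    for j k
  proof -
    have h1: "complex_of_real ((cmod (z j - z k))\<^sup>2) = (z k - z j) * (cnj (z k) - cnj (z j))"
      by (subst norm_minus_commute) (simp only: complex_norm_square complex_cnj_diff)
    have h2: "complex_of_real ((cmod (z j - cnj (z k)))\<^sup>2) = (z k - cnj (z j)) * (cnj (z k) - z j)"
      unfolding complex_norm_square by (simp add: algebra_simps)
    show ?thesis unfolding h1 h2 Y_def by (simp add: algebra_simps)
  qed
  have diag: "complex_of_real ((cmod (z j - cnj (z j)))\<^sup>2) * complex_of_real (\<omega> (z j))
      = (cnj (z j) - z j) * e j" for j
    unfolding complex_norm_square by (simp add: e_def algebra_simps)
  have V: "vandermonde_prod (2*N) (interleave_cnj z)
      = (\<Prod>j<N. (cnj (z j) - z j) * (\<Prod>k\<in>{j<..<N}. Y j k))"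
    unfolding vandermonde_prod_def prod_pairs_double by (simp add: Y_def)
  have "complex_of_real (weightH \<omega> N z)
      = (\<Prod>j<N. \<Prod>k\<in>{j<..<N}. Y j k) * (\<Prod>j<N. (cnj (z j) - z j) * e j)"
    unfolding weightH_def of_real_mult of_real_prod pair diag ..
  also have "\<dots> = vandermonde_prod (2*N) (interleave_cnj z) * (\<Prod>j<N. e j)"
    unfolding V prod.distrib by (simp add: mult_ac)
  finally show ?thesis by (simp add: e_def)
qed

section \<open>Moments of the two ensembles\<close>

locale planar_ensemble =
  fixes \<omega> :: "complex \<Rightarrow> real" and P :: "nat \<Rightarrow> real poly" and b c :: "nat \<Rightarrow> real"
  assumes finite_moments: "\<And>j k. integrable dA (\<lambda>z. z ^ j * cnj z ^ k * complex_of_real (\<omega> z))"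
    and real_moments: "\<And>j k. Im (\<integral>z. z ^ j * cnj z ^ k * complex_of_real (\<omega> z) \<partial>dA) = 0"
    and pos_def: "\<And>f. f \<noteq> 0 \<Longrightarrow> Re (ip \<omega> f f) > 0"
    and monic: "\<And>k. degree (P k) = k \<and> lead_coeff (P k) = 1"
    and orth: "\<And>j k. j \<noteq> k \<Longrightarrow> ip \<omega> (P j) (P k) = 0"
    and rec0: "[:0, 1:] * P 0 = P 1 + smult (b 0) (P 0)"
    and rec: "\<And>k. k \<ge> 1 \<Longrightarrow> [:0, 1:] * P k = P (k+1) + smult (b k) (P k) + smult (c k) (P (k-1))"
    and skew_nz: "\<And>l. hnorm \<omega> P (2*l+1) - c (2*l+1) * hnorm \<omega> P (2*l) \<noteq> 0"
begin

definition moment :: "nat \<Rightarrow> nat \<Rightarrow> real" where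
  "moment a d = Re (\<integral>z. z ^ a * cnj z ^ d * complex_of_real (\<omega> z) \<partial>dA)"

lemma integral_moment:
  "(\<integral>z. z ^ a * cnj z ^ d * complex_of_real (\<omega> z) \<partial>dA) = complex_of_real (moment a d)"
  using real_moments[of a d] by (simp add: moment_def complex_eq_iff)

lemma moment_sym: "moment a d = moment d a"
proof -
  have "cnj (\<integral>z. z ^ a * cnj z ^ d * complex_of_real (\<omega> z) \<partial>dA)
      = (\<integral>z. cnj (z ^ a * cnj z ^ d * complex_of_real (\<omega> z)) \<partial>dA)"
    by (rule Bochner_Integration.integral_cnj[symmetric])
  also have "\<dots> = (\<integral>z. z ^ d * cnj z ^ a * complex_of_real (\<omega> z) \<partial>dA)"
    by (rule Bochner_Integration.integral_cong) (simp_all add: mult.commute)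
  finally have "(\<integral>z. z ^ d * cnj z ^ a * complex_of_real (\<omega> z) \<partial>dA)
      = cnj (\<integral>z. z ^ a * cnj z ^ d * complex_of_real (\<omega> z) \<partial>dA)" ..
  then show ?thesis by (simp add: moment_def)
qed

lemma integral_poly_cnj_poly:
  "integrable dA (\<lambda>w. poly (cpoly u) w * poly (cpoly v) (cnj w) * complex_of_real (\<omega> w))"
  "(\<integral>w. poly (cpoly u) w * poly (cpoly v) (cnj w) * complex_of_real (\<omega> w) \<partial>dA)
     = complex_of_real (moment_form moment u v)"
proof -
  have expand: "poly (cpoly u) w * poly (cpoly v) (cnj w) * complex_of_real (\<omega> w) =
      (\<Sum>a\<le>degree u. \<Sum>d\<le>degree v. complex_of_real (coeff u a * coeff v d)
                                     * (w ^ a * cnj w ^ d * complex_of_real (\<omega> w)))" for w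
  proof -
    have product: "poly (cpoly u) w * poly (cpoly v) (cnj w) = (\<Sum>a\<le>degree u. \<Sum>d\<le>degree v.
        (complex_of_real (coeff u a) * w ^ a) * (complex_of_real (coeff v d) * cnj w ^ d))"
      unfolding poly_cpoly_altdef by (rule sum_product)
    show ?thesis unfolding product sum_distrib_right
      by (intro sum.cong refl) (simp add: algebra_simps)
  qed
  show "integrable dA (\<lambda>w. poly (cpoly u) w * poly (cpoly v) (cnj w) * complex_of_real (\<omega> w))"
    unfolding expand by (simp add: finite_moments)
  show "(\<integral>w. poly (cpoly u) w * poly (cpoly v) (cnj w) * complex_of_real (\<omega> w) \<partial>dA)
      = complex_of_real (moment_form moment u v)"
    unfolding expand
    by (simp add: integral_sum integrable_sum integrable_mult_right finite_moments integral_moment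
        moment_form_def)
qed

lemma ip_eq_moment_form: "ip \<omega> f g = complex_of_real (moment_form moment f g)"
  unfolding ip_def cnj_poly_cpoly using integral_poly_cnj_poly(2)[of f g] by simp

lemma hnorm_eq: "hnorm \<omega> P = (\<lambda>k. moment_form moment (P k) (P k))"
  by (simp add: hnorm_def ip_eq_moment_form fun_eq_iff)

sublocale orthogonal_polys moment P b c
proof
  show "moment i j = moment j i" for i j by (rule moment_sym)
  show "f \<noteq> 0 \<Longrightarrow> moment_form moment f f > 0" for f using pos_def[of f]
    by (simp add: ip_eq_moment_form)
  show "degree (P k) = k \<and> lead_coeff (P k) = 1" for k by (rule monic)
  show "j \<noteq> k \<Longrightarrow> moment_form moment (P j) (P k) = 0" for j k
    using orth[of j k] by (simp add: ip_eq_moment_form)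
  show "[:0, 1:] * P 0 = P 1 + smult (b 0) (P 0)" by (rule rec0)
  show "k \<ge> 1 \<Longrightarrow> [:0, 1:] * P k = P (k+1) + smult (b k) (P k) + smult (c k) (P (k-1))" for k
    by (rule rec)
qed

sublocale skew_orthogonal_polys moment P b c
  by unfold_locales (use skew_nz in \<open>simp add: rho_def hnorm_eq\<close>)

lemma vandermonde_prod_eq_det:
  assumes "\<And>k. degree (Q k) = k \<and> lead_coeff (Q k) = 1"
  shows "vandermonde_prod n x = (\<Sum>\<sigma>\<in>perms n. of_int (sign \<sigma>) *
    (\<Prod>i<n. poly (cpoly (Q (\<sigma> i))) (x i)))"
  using vandermonde_det_eq_prod[of "\<lambda>k. cpoly (Q k)", OF cpoly_monic[OF assms]]
  by (simp add: vandermonde_det_def)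

definition integrandC :: "nat \<Rightarrow> nat \<Rightarrow> nat \<Rightarrow> nat \<Rightarrow> nat \<Rightarrow> nat \<Rightarrow> complex \<Rightarrow> complex" where
  "integrandC p1 p2 m j a d w = poly (cpoly (P a)) w * poly (cpoly (P d)) (cnj w)
     * complex_of_real (\<omega> w) * (if j = m then w ^ p1 * cnj w ^ p2 else 1)"

lemma integrandC_integral:
  "integrable dA (integrandC p1 p2 m j a d)"
  "integral\<^sup>L dA (integrandC p1 p2 m j a d) = complex_of_real
     (moment_form moment (monom 1 (if j = m then p1 else 0) * P a)
       (monom 1 (if j = m then p2 else 0) * P d))"
proof -
  have "integrandC p1 p2 m j a d = (\<lambda>w. poly (cpoly (monom 1 (if j = m then p1 else 0) * P a)) w
      * poly (cpoly (monom 1 (if j = m then p2 else 0) * P d)) (cnj w) * complex_of_real (\<omega> w))"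
    by (rule ext) (simp add: integrandC_def poly_cpoly_monom_mult)
  then show "integrable dA (integrandC p1 p2 m j a d)"
    "integral\<^sup>L dA (integrandC p1 p2 m j a d) = complex_of_real
     (moment_form moment (monom 1 (if j = m then p1 else 0) * P a)
       (monom 1 (if j = m then p2 else 0) * P d))"
    by (simp_all add: integral_poly_cnj_poly)
qed

lemma weightC_expand:
  "complex_of_real (weightC \<omega> N z) * point_monomial N m p1 p2 z
   = (\<Sum>\<sigma>\<in>perms N. \<Sum>\<tau>\<in>perms N.
        of_int (sign \<sigma>) * of_int (sign \<tau>) * (\<Prod>j<N. integrandC p1 p2 m j (\<sigma> j) (\<tau> j) (z j)))"
proof -
  define C where "C = (\<Prod>j<N. complex_of_real (\<omega> (z j)))"
  define D where "D = (\<Prod>j<N. (if j = m then z j ^ p1 * cnj (z j) ^ p2 else 1))"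
  have "(\<Sum>\<sigma>\<in>perms N. \<Sum>\<tau>\<in>perms N.
          of_int (sign \<sigma>) * of_int (sign \<tau>) * (\<Prod>j<N. integrandC p1 p2 m j (\<sigma> j) (\<tau> j) (z j)))
      = (\<Sum>\<sigma>\<in>perms N. \<Sum>\<tau>\<in>perms N. (of_int (sign \<sigma>) * (\<Prod>j<N. poly (cpoly (P (\<sigma> j))) (z j)))
          * (of_int (sign \<tau>) * (\<Prod>j<N. poly (cpoly (P (\<tau> j))) (cnj (z j)))) * (C * D))"
    unfolding integrandC_def C_def D_def prod.distrib by (simp add: algebra_simps)
  also have "\<dots> = vandermonde_prod N z * cnj (vandermonde_prod N z) * (C * D)"
    unfolding vandermonde_prod_eq_det[OF monic]
    by (simp add: cnj_poly_cpoly sum_distrib_left sum_distrib_right) (rule sum.swap)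
  finally show ?thesis
    unfolding weightC_eq_vandermonde point_monomial_def C_def D_def prod.delta[OF finite_lessThan]
    by (simp add: algebra_simps)
qed

lemma integral_weightC_insert:
  shows "integrable (confM N) (\<lambda>z. complex_of_real (weightC \<omega> N z) * point_monomial N m p1 p2 z)"
    and "(\<integral>z. complex_of_real (weightC \<omega> N z) * point_monomial N m p1 p2 z \<partial>confM N)
      = (\<Sum>\<sigma>\<in>perms N. \<Prod>j<N. if j = m
           then complex_of_real (moment_form moment (monom 1 p1 * P (\<sigma> j)) (monom 1 p2 * P (\<sigma> j)))
           else complex_of_real (sqnorm (\<sigma> j)))" (is "?lhs = ?rhs")
proof -
  have inner_integrable: "integrable (confM N) (\<lambda>z. \<Sum>\<tau>\<in>perms N.
      of_int (sign \<sigma>) * of_int (sign \<tau>) * (\<Prod>j<N. integrandC p1 p2 m j (\<sigma> j) (\<tau> j) (z j)))" for \<sigma>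
    by (rule confM_integral_sum_prod(1)) (rule integrandC_integral(1))
  have inner: "(\<integral>z. (\<Sum>\<tau>\<in>perms N.
      of_int (sign \<sigma>) * of_int (sign \<tau>) * (\<Prod>j<N. integrandC p1 p2 m j (\<sigma> j) (\<tau> j) (z j))) \<partial>confM N)
    = (\<Sum>\<tau>\<in>perms N. of_int (sign \<sigma>) * of_int (sign \<tau>)
         * (\<Prod>j<N. integral\<^sup>L dA (integrandC p1 p2 m j (\<sigma> j) (\<tau> j))))" for \<sigma>
    by (rule confM_integral_sum_prod(2)) (rule integrandC_integral(1))
  show "integrable (confM N) (\<lambda>z. complex_of_real (weightC \<omega> N z) * point_monomial N m p1 p2 z)"
    unfolding weightC_expand using inner_integrable by simp
  define M where "M j a d = complex_of_real (moment_form moment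
      (monom 1 (if j = m then p1 else 0) * P a)
        (monom 1 (if j = m then p2 else 0) * P d))" for j a d
  have "?lhs = (\<Sum>\<sigma>\<in>perms N. \<Sum>\<tau>\<in>perms N.
      of_int (sign \<sigma>) * of_int (sign \<tau>) * (\<Prod>j<N. M j (\<sigma> j) (\<tau> j)))"
    unfolding weightC_expand
    by (simp add: Bochner_Integration.integral_sum inner_integrable
      inner integrandC_integral(2) M_def)
  also have "\<dots> = (\<Sum>\<sigma>\<in>perms N. \<Prod>j<N. M j (\<sigma> j) (\<sigma> j))"
    by (rule sum_perms_pairs_diagonal[where m = m]) (simp add: M_def orth)
  also have "\<dots> = ?rhs"
    by (intro sum.cong prod.cong refl) (simp add: M_def)
  finally show "?lhs = ?rhs" .
qed

lemma momC_eq: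
  "momC \<omega> p1 p2 N = complex_of_real
     (\<Sum>k<N. moment_form moment (monom 1 p1 * P k) (monom 1 p2 * P k) / sqnorm k)"
  unfolding momC_def
  by (subst ens_expect_power_sum[OF integral_weightC_insert]) (simp_all add: sqnorm_nonzero)

definition integrandH :: "nat \<Rightarrow> nat \<Rightarrow> nat \<Rightarrow> nat \<Rightarrow> nat \<Rightarrow> nat \<Rightarrow> complex \<Rightarrow> complex" where
  "integrandH p1 p2 m j a d w = poly (cpoly (skew_poly a)) w * poly (cpoly (skew_poly d)) (cnj w)
     * (w - cnj w) * complex_of_real (\<omega> w) * (if j = m then w ^ p1 * cnj w ^ p2 else 1)"

lemma integrandH_integral:
  "integrable dA (integrandH p1 p2 m j a d)"
  "integral\<^sup>L dA (integrandH p1 p2 m j a d) = complex_of_real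
     (skew_form (monom 1 (if j = m then p1 else 0) * skew_poly a)
       (monom 1 (if j = m then p2 else 0) * skew_poly d))"
proof -
  let ?u = "monom 1 (if j = m then p1 else 0) * skew_poly a"
  let ?v = "monom 1 (if j = m then p2 else 0) * skew_poly d"
  have "integrandH p1 p2 m j a d = (\<lambda>w.
      poly (cpoly ([:0,1:] * ?u)) w * poly (cpoly ?v) (cnj w) * complex_of_real (\<omega> w)
    - poly (cpoly ?u) w * poly (cpoly ([:0,1:] * ?v)) (cnj w) * complex_of_real (\<omega> w))"
    by (rule ext) (simp add: integrandH_def poly_cpoly_X_mult
        poly_cpoly_pCons_0 poly_cpoly_monom_mult
        algebra_simps)
  then show "integrable dA (integrandH p1 p2 m j a d)"
    "integral\<^sup>L dA (integrandH p1 p2 m j a d) = complex_of_real (skew_form ?u ?v)"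
    by (simp_all add: integral_poly_cnj_poly Bochner_Integration.integral_diff skew_form_def)
qed

lemma vandermonde_prod_interleave_cnj:
  "vandermonde_prod (2*N) (interleave_cnj z) = (\<Sum>\<sigma>\<in>perms (2*N). of_int (sign \<sigma>) *
     (\<Prod>j<N. poly (cpoly (skew_poly (\<sigma> (2*j)))) (z j)
        * poly (cpoly (skew_poly (\<sigma> (Suc (2*j))))) (cnj (z j))))"
  unfolding vandermonde_prod_eq_det[OF skew_poly_monic] prod_lessThan_double by simp

lemma weightH_expand:
  "complex_of_real (weightH \<omega> N z) * point_monomial N m p1 p2 z
   = (\<Sum>\<sigma>\<in>perms (2*N). of_int (sign \<sigma>) *
      (\<Prod>j<N. integrandH p1 p2 m j (\<sigma> (2*j)) (\<sigma> (Suc (2*j))) (z j)))"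
proof -
  define E where "E = (\<Prod>j<N. (z j - cnj (z j)) * complex_of_real (\<omega> (z j)))"
  define D where "D = (\<Prod>j<N. (if j = m then z j ^ p1 * cnj (z j) ^ p2 else 1))"
  have "(\<Prod>j<N. integrandH p1 p2 m j (\<sigma> (2*j)) (\<sigma> (Suc (2*j))) (z j)) =
      (\<Prod>j<N. poly (cpoly (skew_poly (\<sigma> (2*j)))) (z j)
        * poly (cpoly (skew_poly (\<sigma> (Suc (2*j))))) (cnj (z j)))
      * E * D" for \<sigma>
    unfolding integrandH_def E_def D_def by (simp add: prod.distrib mult_ac)
  then have "(\<Sum>\<sigma>\<in>perms (2*N). of_int (sign \<sigma>) *
      (\<Prod>j<N. integrandH p1 p2 m j (\<sigma> (2*j)) (\<sigma> (Suc (2*j))) (z j)))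
      = vandermonde_prod (2*N) (interleave_cnj z) * E * D"
    unfolding vandermonde_prod_interleave_cnj sum_distrib_right by (simp add: mult_ac)
  then show ?thesis
    unfolding weightH_eq_vandermonde point_monomial_def E_def D_def prod.delta[OF finite_lessThan]
      by simp
qed

lemma integral_weightH_insert:
  shows "integrable (confM N) (\<lambda>z. complex_of_real (weightH \<omega> N z) * point_monomial N m p1 p2 z)"
    and "(\<integral>z. complex_of_real (weightH \<omega> N z) * point_monomial N m p1 p2 z \<partial>confM N)
      = (\<Sum>\<pi>\<in>perms N. \<Prod>j<N. if j = m then complex_of_real (pair_moment p1 p2 (\<pi> j))
                                        else complex_of_real (2 * rho (\<pi> j)))" (is "?lhs = ?rhs")
proof -
  note sums = confM_integral_sum_prod[where S = "perms (2*N)" and c = "\<lambda>\<sigma>. of_int (sign \<sigma>)"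
      and T = "\<lambda>\<sigma> j. integrandH p1 p2 m j (\<sigma> (2*j)) (\<sigma> (Suc (2*j)))", OF integrandH_integral(1)]
  show "integrable (confM N) (\<lambda>z. complex_of_real (weightH \<omega> N z) * point_monomial N m p1 p2 z)"
    unfolding weightH_expand by (rule sums(1))
  define G where "G j a d = complex_of_real (skew_form (monom 1 (if j = m then p1 else 0) * skew_poly a)
      (monom 1 (if j = m then p2 else 0) * skew_poly d))" for j a d
  have "?lhs = (\<Sum>\<sigma>\<in>perms (2*N). of_int (sign \<sigma>) * (\<Prod>j<N. G j (\<sigma> (2*j)) (\<sigma> (Suc (2*j)))))"
    unfolding weightH_expand sums(2) integrandH_integral(2) G_def ..
  also have "\<dots> = (\<Sum>\<pi>\<in>perms N. \<Prod>j<N. G j (2 * \<pi> j) (Suc (2 * \<pi> j)) - G j (Suc (2 * \<pi> j)) (2 * \<pi> j))"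
    by (rule de_Bruijn_sum[where m = m]) (simp add: G_def skew_form_orth)
  also have "\<dots> = ?rhs"
    by (intro sum.cong prod.cong refl)
      (simp add: G_def pair_moment_def skew_form_pair skew_form_pair')
  finally show "?lhs = ?rhs" .
qed

lemma momH_eq: "momH \<omega> p1 p2 N = complex_of_real (\<Sum>k<N. pair_moment p1 p2 k / (2 * rho k))"
  unfolding momH_def
  by (subst ens_expect_power_sum[OF integral_weightH_insert]) (simp_all add: rho_nonzero)

end

theorem mainTheorem2:
  fixes \<omega> :: "complex \<Rightarrow> real" and P :: "nat \<Rightarrow> real poly" and b c :: "nat \<Rightarrow> real"
    and p1 p2 q N :: nat
  assumes nonneg: "\<And>z. \<omega> z \<ge> 0"
    and finite_moments: "\<And>j k. integrable dA (\<lambda>z. z ^ j * cnj z ^ k * complex_of_real (\<omega> z))"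
    and real_moments: "\<And>j k. Im (\<integral>z. z ^ j * cnj z ^ k * complex_of_real (\<omega> z) \<partial>dA) = 0"
    and pos_def: "\<And>f. f \<noteq> 0 \<Longrightarrow> Re (ip \<omega> f f) > 0"
    and monic: "\<And>k. degree (P k) = k \<and> lead_coeff (P k) = 1"
    and orth: "\<And>j k. j \<noteq> k \<Longrightarrow> ip \<omega> (P j) (P k) = 0"
    and rec0: "[:0, 1:] * P 0 = P 1 + smult (b 0) (P 0)"
    and rec: "\<And>k. k \<ge> 1 \<Longrightarrow> [:0, 1:] * P k = P (k+1) + smult (b k) (P k) + smult (c k) (P (k-1))"
    and skew_nz: "\<And>l. hnorm \<omega> P (2*l+1) - c (2*l+1) * hnorm \<omega> P (2*l) \<noteq> 0"
    and N: "N \<ge> 1"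
  shows
    "momC \<omega> p1 p2 N = complex_of_real
        (\<Sum>k<N. \<Sum>j\<in>{k - min p1 p2 .. k + min p1 p2}.
           hnorm \<omega> P j / hnorm \<omega> P k * Acoef P p1 j k * Acoef P p2 j k)
   \<and> momC \<omega> q 0 N = complex_of_real (\<Sum>k<N. Acoef P q k k)
   \<and> momH \<omega> p1 p2 N = complex_of_real
        (1/2 * (\<Sum>k<N. frak_m (hnorm \<omega> P) c (Acoef P) p1 p2 k))
   \<and> momH \<omega> q 0 N = 1/2 * momC \<omega> q 0 (2*N)
        - complex_of_real (1/2 * (\<Sum>j<N. mu (hnorm \<omega> P) c N j * Acoef P q (2*N) (2*j)))"
proof -
  interpret E: planar_ensemble \<omega> P b c
    by unfold_locales (fact finite_moments real_moments pos_def monic orth rec0 rec skew_nz)+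
  have h: "hnorm \<omega> P = E.sqnorm" by (rule E.hnorm_eq)
  have C: "momC \<omega> r1 r2 M = complex_of_real
      (\<Sum>k<M. \<Sum>j\<in>{k - min r1 r2 .. k + min r1 r2}.
         hnorm \<omega> P j / hnorm \<omega> P k * Acoef P r1 j k * Acoef P r2 j k)" for r1 r2 M
    unfolding E.momC_eq E.form_monom_mult_P_diag h ..
  have C0: "momC \<omega> q 0 M = complex_of_real (\<Sum>k<M. Acoef P q k k)" for M
    unfolding C by (simp add: E.Acoef_0 E.sqnorm_nonzero h)
  have H: "momH \<omega> r1 r2 M = complex_of_real (1/2 * (\<Sum>k<M. frak_m (hnorm \<omega> P) c (Acoef P) r1 r2 k))"
    for r1 r2 M
    unfolding E.momH_eq E.pair_moment_eq h sum_distrib_left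
    by (intro arg_cong[where f = complex_of_real] sum.cong refl) (simp add: E.rho_nonzero)
  have H0: "momH \<omega> q 0 N = 1/2 * momC \<omega> q 0 (2*N)
      - complex_of_real (1/2 * (\<Sum>j<N. mu (hnorm \<omega> P) c N j * Acoef P q (2*N) (2*j)))"
  proof -
    have "momH \<omega> q 0 N = complex_of_real (1/2 * ((\<Sum>i<2*N. Acoef P q i i)
        - (\<Sum>j<N. mu (hnorm \<omega> P) c N j * Acoef P q (2*N) (2*j))))"
      unfolding H h E.sum_frak_m_holomorphic ..
    then show ?thesis unfolding C0 by (simp add: right_diff_distrib)
  qed
  show ?thesis using C C0 H H0 by blast
qed

end
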